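(* Let $X$ be a Euclidean polyhedral space, $U\subset X$ open, and $\Pi$ a polyhedral complex on $X$ such that $\Pi|_U$ is finite. Then there is a strongly concave piecewise affine function $f$ on $X$ such that $S(\Pi,f)|_U$ is finite and $f$ is strictly concave on $S(\Pi,f)|_U$. In particular, $S(\Pi,f)$ is a subdivision of $\Pi$ that is regular on $U$.
   Context: Polyhedral spaces. Let $X$ be a second countable topological space. A polyhedral structure $\Pi$ on $X$ is a locally finite covering of $X$ by distinct closed subsets $\sigma$ (polyhedra), each with a finite-dimensional vector space $M_\sigma$ of continuous real functions on $\sigma$ such that, with $N_\sigma=\operatorname{Hom}(M_\sigma,\mathbb{R})$, the evaluation map $\phi_\sigma\colon\sigma\to N_\sigma$ is a homeomorphism onto a full-dimensional convex polyhedron of an affine hyperplane of $N_\sigma$ not containing $0$. Faces of $\sigma$ are preimages of faces of $\phi_\sigma(\sigma)$ (including the empty face); every face of a polyhedron is a polyhedron of $\Pi$ with function space the restrictions of $M_\sigma$; any two polyhedra meet in a common face. Each polyhedron thus has an affine structure, dimension, facets, relative interior. $\Pi'$ subdivides $\Pi$ if each polyhedron of $\Pi'$ lies in one of $\Pi$ with affine inclusion; structures are equivalent if they have a common subdivision. A polyhedral space is $X$ with an equivalence class of structures; a polyhedral complex on $X$ is a member of the class. $\tau\prec\sigma$ means $\tau$ is a face of $\sigma$. A Euclidean polyhedral space is a polyhedral space $X$ with a finite-dimensional Euclidean vector space $N_X$ and a map $\iota\colon X\to N_X$ with image in an affine hyperplane $H_X\not\ni0$ such that some polyhedral complex has $\iota$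 injective and affine on each polyhedron; only such complexes are considered. For a nonempty facet $\tau$ of $\sigma$, $v_{\sigma\setminus\tau}$ is the unit vector orthogonal to the affine span of $\iota(\tau)$, parallel to that of $\iota(\sigma)$, pointing towards $\iota(\sigma)$. For $V$ open, $\Pi|_V$ is the set of polyhedra of $\Pi$ meeting $V$, $\Pi|_V(k)$ those of dimension $k$. A $k$-dimensional weight $c\colon\Pi|_V(k)\to\mathbb{R}$ is positive if $c\ge0$, a Minkowski weight if $\sum_{\sigma\in\Pi|_V(k),\sigma\succ\tau}c(\sigma)v_{\sigma\setminus\tau}=0$ for all $\tau\in\Pi|_V(k-1)$; $M^+_k(\Pi|_V)$ denotes positive Minkowski weights. A piecewise affine function on $V$ defined on $\Pi$ is $f\colon V\to\mathbb{R}$ affine on each $\sigma\cap V$, $\sigma\in\Pi|_V$; write $f=f_\sigma\circ\iota$ there with $f_\sigma$ linear; $(f\cdot c)(\tau)=-\sum_{\sigma\in\Pi|_V(k),\sigma\succ\tau}c(\sigma)f_\sigma(v_{\sigma\setminus\tau})$. A piecewise affine $f$ on $X$ is strongly concave if $f=f'\circ\iota$ for some $f'\colon H_X\to\mathbb{R}\cup\{\pm\infty\}$ whose hypograph is convex. Strict concavity and regularity: a piecewise affine $f$ on $U$ is strictly concave on $\Pi|_U$ if it is defined on $\Pi$ and for every integer $k$, every $\tau\in\Pi|_U(k)$, every open $V\subset U$ with $V\cap\tau\ne\emptyset$ and every $c\in M^+_{k+1}(\Pi|_V)$ with $c(\sigma)>0$ for some $\sigma\in\Pi|_V(k+1)$,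 $\sigma\succ\tau$, one has $(f\cdot c)(\tau)>0$. $\Pi$ is regular on $U$ if there is such an $f$. $S(\Pi,f)$: for a piecewise affine $f$ whose restriction to each polyhedron of $\Pi$ is concave, $S(\Pi,f)=\bigcup_{\sigma\in\Pi}\Pi(f|_\sigma)$, where $\Pi(f|_\sigma)$ is the set of subsets $\rho\subset\sigma$ for which some affine function $\ell$ on $\sigma$ satisfies $f=\ell$ on $\rho$ and $f<\ell$ on $\sigma\setminus\rho$. *)

theory Defs
  imports "HOL-Analysis.Analysis"
begin

text \<open>Euclidean polyhedral spaces, modelled through the map iota into the
Euclidean space N_X (type 'v). Polyhedra are subsets of the topological
space X; their affine structure is the one pulled back along iota.\<close>

definition hyperplane_off_origin :: "'v::euclidean_space set \<Rightarrow> bool" where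
  "hyperplane_off_origin H \<longleftrightarrow> (\<exists>a b. a \<noteq> 0 \<and> b \<noteq> 0 \<and> H = {y. a \<bullet> y = b})"

definition pface :: "('a \<Rightarrow> 'v::euclidean_space) \<Rightarrow> 'a set \<Rightarrow> 'a set \<Rightarrow> bool" where
  "pface \<iota> \<tau> \<sigma> \<longleftrightarrow> \<tau> \<subseteq> \<sigma> \<and> (\<iota> ` \<tau>) face_of (\<iota> ` \<sigma>)"

definition pdim :: "('a \<Rightarrow> 'v::euclidean_space) \<Rightarrow> 'a set \<Rightarrow> int" where
  "pdim \<iota> \<sigma> = aff_dim (\<iota> ` \<sigma>)"

definition euclidean_complex ::
  "'a topology \<Rightarrow> ('a \<Rightarrow> 'v::euclidean_space) \<Rightarrow> 'a set set \<Rightarrow> bool" where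
  "euclidean_complex X \<iota> \<P> \<longleftrightarrow>
     \<Union>\<P> = topspace X \<and>
     (\<forall>x\<in>topspace X. \<exists>W. openin X W \<and> x \<in> W \<and> finite {\<sigma>\<in>\<P>. \<sigma> \<inter> W \<noteq> {}}) \<and>
     (\<forall>\<sigma>\<in>\<P>. closedin X \<sigma> \<and> polyhedron (\<iota> ` \<sigma>) \<and> inj_on \<iota> \<sigma> \<and>
          homeomorphic_map (subtopology X \<sigma>) (top_of_set (\<iota> ` \<sigma>)) \<iota>) \<and>
     (\<forall>\<sigma>\<in>\<P>. \<forall>F. F face_of (\<iota> ` \<sigma>) \<longrightarrow> \<sigma> \<inter> \<iota> -` F \<in> \<P>) \<and>
     (\<forall>\<sigma>\<in>\<P>. \<forall>\<tau>\<in>\<P>. pface \<iota> (\<sigma> \<inter> \<tau>) \<sigma> \<and> pface \<iota> (\<sigma> \<inter> \<tau>) \<tau>)"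

definition euclidean_polyhedral_space ::
  "'a topology \<Rightarrow> ('a \<Rightarrow> 'v::euclidean_space) \<Rightarrow> 'v set \<Rightarrow> 'a set set \<Rightarrow> bool" where
  "euclidean_polyhedral_space X \<iota> H \<P> \<longleftrightarrow>
     second_countable X \<and> hyperplane_off_origin H \<and> \<iota> ` topspace X \<subseteq> H \<and>
     euclidean_complex X \<iota> \<P>"

text \<open>Pi' subdivides Pi (affine inclusion is automatic, both structures being pulled back along iota).\<close>
definition subdivides :: "'a set set \<Rightarrow> 'a set set \<Rightarrow> bool" where
  "subdivides \<P>' \<P> \<longleftrightarrow> (\<forall>\<rho>\<in>\<P>'. \<exists>\<sigma>\<in>\<P>. \<rho> \<subseteq> \<sigma>)"

definition equivalent_complexes ::
  "'a topology \<Rightarrow> ('a \<Rightarrow> 'v::euclidean_space) \<Rightarrow> 'a set set \<Rightarrow> 'a set set \<Rightarrow> bool" where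
  "equivalent_complexes X \<iota> \<P> \<P>' \<longleftrightarrow>
     (\<exists>\<P>''. euclidean_complex X \<iota> \<P>'' \<and> subdivides \<P>'' \<P> \<and> subdivides \<P>'' \<P>')"

definition restr :: "'a set set \<Rightarrow> 'a set \<Rightarrow> 'a set set" where
  "restr \<P> V = {\<sigma>\<in>\<P>. \<sigma> \<inter> V \<noteq> {}}"

definition restr_dim :: "('a \<Rightarrow> 'v::euclidean_space) \<Rightarrow> 'a set set \<Rightarrow> 'a set \<Rightarrow> int \<Rightarrow> 'a set set" where
  "restr_dim \<iota> \<P> V k = {\<sigma>\<in>restr \<P> V. pdim \<iota> \<sigma> = k}"

definition direction :: "'v::euclidean_space set \<Rightarrow> 'v set" where
  "direction S = {y - x | x y. x \<in> affine hull S \<and> y \<in> affine hull S}"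

definition vnormal :: "('a \<Rightarrow> 'v::euclidean_space) \<Rightarrow> 'a set \<Rightarrow> 'a set \<Rightarrow> 'v" where
  "vnormal \<iota> \<sigma> \<tau> = (THE v. norm v = 1 \<and> v \<in> direction (\<iota> ` \<sigma>) \<and>
       (\<forall>w\<in>direction (\<iota> ` \<tau>). v \<bullet> w = 0) \<and>
       (\<forall>x\<in>\<iota> ` \<tau>. \<forall>y\<in>\<iota> ` \<sigma>. (y - x) \<bullet> v \<ge> 0))"

definition pos_minkowski_weight ::
  "('a \<Rightarrow> 'v::euclidean_space) \<Rightarrow> 'a set set \<Rightarrow> 'a set \<Rightarrow> int \<Rightarrow> ('a set \<Rightarrow> real) \<Rightarrow> bool" where
  "pos_minkowski_weight \<iota> \<P> V k c \<longleftrightarrow>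
     (\<forall>\<sigma>\<in>restr_dim \<iota> \<P> V k. c \<sigma> \<ge> 0) \<and>
     (\<forall>\<tau>\<in>restr_dim \<iota> \<P> V (k - 1).
        (\<Sum>\<sigma>\<in>{\<sigma>\<in>restr_dim \<iota> \<P> V k. pface \<iota> \<tau> \<sigma>}. c \<sigma> *\<^sub>R vnormal \<iota> \<sigma> \<tau>) = 0)"

definition pw_affine_on ::
  "('a \<Rightarrow> 'v::euclidean_space) \<Rightarrow> 'a set set \<Rightarrow> 'a set \<Rightarrow> ('a \<Rightarrow> real) \<Rightarrow> bool" where
  "pw_affine_on \<iota> \<P> V f \<longleftrightarrow>
     (\<forall>\<sigma>\<in>restr \<P> V. \<exists>g. linear g \<and> (\<forall>x\<in>\<sigma> \<inter> V. f x = g (\<iota> x)))"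

definition lin_part ::
  "('a \<Rightarrow> 'v::euclidean_space) \<Rightarrow> 'a set \<Rightarrow> ('a \<Rightarrow> real) \<Rightarrow> 'a set \<Rightarrow> ('v \<Rightarrow> real)" where
  "lin_part \<iota> V f \<sigma> = (SOME g. linear g \<and> (\<forall>x\<in>\<sigma> \<inter> V. f x = g (\<iota> x)))"

definition wdot ::
  "('a \<Rightarrow> 'v::euclidean_space) \<Rightarrow> 'a set set \<Rightarrow> 'a set \<Rightarrow> ('a \<Rightarrow> real) \<Rightarrow> int \<Rightarrow> ('a set \<Rightarrow> real) \<Rightarrow> 'a set \<Rightarrow> real" where
  "wdot \<iota> \<P> V f k c \<tau> =
     - (\<Sum>\<sigma>\<in>{\<sigma>\<in>restr_dim \<iota> \<P> V k. pface \<iota> \<tau> \<sigma>}. c \<sigma> * lin_part \<iota> V f \<sigma> (vnormal \<iota> \<sigma> \<tau>))"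

definition strictly_concave_on_complex ::
  "'a topology \<Rightarrow> ('a \<Rightarrow> 'v::euclidean_space) \<Rightarrow> 'a set set \<Rightarrow> 'a set \<Rightarrow> ('a \<Rightarrow> real) \<Rightarrow> bool" where
  "strictly_concave_on_complex X \<iota> \<P> U f \<longleftrightarrow>
     pw_affine_on \<iota> \<P> U f \<and>
     (\<forall>k::int. \<forall>\<tau>\<in>restr_dim \<iota> \<P> U k. \<forall>V. openin X V \<and> V \<subseteq> U \<and> V \<inter> \<tau> \<noteq> {} \<longrightarrow>
        (\<forall>c. pos_minkowski_weight \<iota> \<P> V (k + 1) c \<and>
             (\<exists>\<sigma>\<in>restr_dim \<iota> \<P> V (k + 1). pface \<iota> \<tau> \<sigma> \<and> c \<sigma> > 0)
             \<longrightarrow> wdot \<iota> \<P> V f (k + 1) c \<tau> > 0))"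

definition regular_on ::
  "'a topology \<Rightarrow> ('a \<Rightarrow> 'v::euclidean_space) \<Rightarrow> 'a set set \<Rightarrow> 'a set \<Rightarrow> bool" where
  "regular_on X \<iota> \<P> U \<longleftrightarrow> (\<exists>f. strictly_concave_on_complex X \<iota> \<P> U f)"

definition pw_affine_on_space ::
  "'a topology \<Rightarrow> ('a \<Rightarrow> 'v::euclidean_space) \<Rightarrow> 'a set set \<Rightarrow> ('a \<Rightarrow> real) \<Rightarrow> bool" where
  "pw_affine_on_space X \<iota> \<P> f \<longleftrightarrow>
     (\<exists>\<P>'. euclidean_complex X \<iota> \<P>' \<and> equivalent_complexes X \<iota> \<P> \<P>' \<and>
           pw_affine_on \<iota> \<P>' (topspace X) f)"

definition strongly_concave ::
  "'a topology \<Rightarrow> ('a \<Rightarrow> 'v::euclidean_space) \<Rightarrow> 'v set \<Rightarrow> ('a \<Rightarrow> real) \<Rightarrow> bool" where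
  "strongly_concave X \<iota> H f \<longleftrightarrow>
     (\<exists>f'::'v \<Rightarrow> ereal. (\<forall>x\<in>topspace X. ereal (f x) = f' (\<iota> x)) \<and>
        convex {(y, t::real). y \<in> H \<and> ereal t \<le> f' y})"

definition linearity_domains ::
  "('a \<Rightarrow> 'v::euclidean_space) \<Rightarrow> ('a \<Rightarrow> real) \<Rightarrow> 'a set \<Rightarrow> 'a set set" where
  "linearity_domains \<iota> f \<sigma> = {\<rho>. \<rho> \<subseteq> \<sigma> \<and> (\<exists>a b. (\<forall>x\<in>\<rho>. f x = a \<bullet> \<iota> x + b) \<and>
                                          (\<forall>x\<in>\<sigma> - \<rho>. f x < a \<bullet> \<iota> x + b))}"

definition S_complex ::
  "('a \<Rightarrow> 'v::euclidean_space) \<Rightarrow> 'a set set \<Rightarrow> ('a \<Rightarrow> real) \<Rightarrow> 'a set set" where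
  "S_complex \<iota> \<P> f = (\<Union>\<sigma>\<in>\<P>. linearity_domains \<iota> f \<sigma>)"

end

theory Submission
  imports Defs
begin

text \<open>Choose a finite set J of affine forms on \<open>N\<^sub>X\<close> containing the facet inequalities of
all polyhedra of \<open>\<Pi>\<close> meeting U, and let f be the pullback along \<open>\<iota>\<close> of the sum of the
functions \<open>min h 0\<close>, \<open>h \<in> J\<close>. This is a concave function on the whole space, hence strongly concave,
and on the hyperplane \<open>H\<^sub>X\<close>, which misses the origin, affine functions are linear.
The linearity domains of f on a polyhedron \<open>\<sigma>\<close> are exactly the intersections of faces of \<open>\<sigma>\<close>
with the sign cells of the arrangement J, so \<open>S(\<Pi>, f)\<close> is a subdivision of \<open>\<Pi>\<close>, finite over U.
For strict concavity, \<open>(f \<cdot> c)(\<tau>)\<close> splits into one contribution per form h: if h does not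
vanish on \<open>\<tau>\<close>, then \<open>min h 0\<close> is affine across \<open>\<tau>\<close> and contributes zero by the balancing
condition; if it does, the contribution is nonnegative, and positive as soon as h does not vanish
on a cell \<open>\<sigma>\<close> with \<open>c(\<sigma>) > 0\<close>. Such a form exists in J because \<open>\<tau>\<close> is a proper face of \<open>\<sigma>\<close>, and
the faces of \<open>\<sigma>\<close> are cut out by facet inequalities of the ambient polyhedron and forms of J.\<close>

section \<open>Affine forms and H-polyhedra\<close>

definition aff_form :: "'v::euclidean_space \<times> real \<Rightarrow> 'v \<Rightarrow> real" where
  "aff_form p y = fst p \<bullet> y - snd p"

definition neg_form :: "'v::euclidean_space \<times> real \<Rightarrow> 'v \<times> real" where
  "neg_form p = (- fst p, - snd p)"

definition hpoly :: "('v::euclidean_space \<times> real) set \<Rightarrow> 'v set" where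
  "hpoly D = {y. \<forall>p\<in>D. aff_form p y \<le> 0}"

definition common_zeros :: "('v::euclidean_space \<times> real) set \<Rightarrow> 'v set" where
  "common_zeros E = {y. \<forall>p\<in>E. aff_form p y = 0}"

definition active :: "('v::euclidean_space \<times> real) set \<Rightarrow> 'v set \<Rightarrow> ('v \<times> real) set" where
  "active D F = {p\<in>D. \<forall>z\<in>F. aff_form p z = 0}"

lemma aff_form_neg_form [simp]: "aff_form (neg_form p) y = - aff_form p y"
  by (simp add: aff_form_def neg_form_def)

lemma aff_form_convex_comb:
  "u + v = 1 \<Longrightarrow> aff_form p (u *\<^sub>R x + v *\<^sub>R y) = u * aff_form p x + v * aff_form p y"
  by (simp add: aff_form_def inner_add_right algebra_simps) (metis distrib_right mult_1)

lemma sum_aff_form: "(\<Sum>j\<in>N. aff_form j y) = (\<Sum>j\<in>N. fst j) \<bullet> y - (\<Sum>j\<in>N. snd j)"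
  by (simp add: aff_form_def sum_subtractf inner_sum_left)

lemma hpoly_eq_INT: "hpoly D = (\<Inter>p\<in>D. {y. fst p \<bullet> y \<le> snd p})"
  by (auto simp: hpoly_def aff_form_def)

lemma convex_hpoly: "convex (hpoly D)"
  by (auto simp: hpoly_eq_INT intro!: convex_INT convex_halfspace_le)

lemma closed_hpoly: "closed (hpoly D)"
  by (auto simp: hpoly_eq_INT intro!: closed_INT closed_halfspace_le)

lemma polyhedron_hpoly: "finite D \<Longrightarrow> polyhedron (hpoly D)"
  by (auto simp: hpoly_eq_INT intro!: polyhedron_Inter polyhedron_halfspace_le)

lemma affine_common_zeros: "affine (common_zeros E)"
  unfolding affine_def common_zeros_def by (auto simp: aff_form_convex_comb)

lemma common_zeros_Un [simp]: "common_zeros (A \<union> B) = common_zeros A \<inter> common_zeros B"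
  by (auto simp: common_zeros_def)

lemma hpoly_Un [simp]: "hpoly (A \<union> B) = hpoly A \<inter> hpoly B"
  by (auto simp: hpoly_def)

lemma common_zeros_antimono: "A \<subseteq> B \<Longrightarrow> common_zeros B \<subseteq> common_zeros A"
  by (auto simp: common_zeros_def)

lemma active_mono: "A \<subseteq> B \<Longrightarrow> active A F \<subseteq> active B F"
  by (auto simp: active_def)

lemma active_Un [simp]: "active (A \<union> B) F = active A F \<union> active B F"
  by (auto simp: active_def)

lemma subset_common_zeros_active: "F \<subseteq> common_zeros (active D F)"
  by (auto simp: active_def common_zeros_def)

lemma polyhedron_hpoly_representation:
  fixes Q :: "'v::euclidean_space set"
  assumes "polyhedron Q"
  obtains C where "finite C" "Q = affine hull Q \<inter> hpoly C"
proof -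
  have "\<exists>F. finite F \<and> Q = affine hull Q \<inter> \<Inter>F \<and> (\<forall>h\<in>F. \<exists>a b. a \<noteq> 0 \<and> h = {x. a \<bullet> x \<le> b})"
    using assms by (simp only: polyhedron_Int_affine)
  then obtain F where F: "finite F" "Q = affine hull Q \<inter> \<Inter>F"
    and halfspaces: "\<forall>h\<in>F. \<exists>a b. a \<noteq> 0 \<and> h = {x. a \<bullet> x \<le> b}"
    by (elim exE conjE)
  have "\<exists>p. \<forall>x. x \<in> h \<longleftrightarrow> fst p \<bullet> x \<le> snd p" if hF: "h \<in> F" for h
  proof -
    obtain a b where "h = {x. a \<bullet> x \<le> b}"
      using bspec[OF halfspaces hF] by (elim exE conjE)
    then show ?thesis
      by (intro exI[of _ "(a, b)"]) simp
  qed
  then obtain g where "\<forall>h\<in>F. \<forall>x. x \<in> h \<longleftrightarrow> fst (g h) \<bullet> x \<le> snd (g h)"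
    by metis
  then have "\<Inter>F = hpoly (g ` F)"
    unfolding hpoly_eq_INT by blast
  with F show thesis
    using that[of "g ` F"] by simp
qed

definition sign_constant_on :: "('v::euclidean_space \<times> real) set \<Rightarrow> 'v set \<Rightarrow> bool" where
  "sign_constant_on E R \<longleftrightarrow> (\<forall>p\<in>E. (\<forall>y\<in>R. aff_form p y \<le> 0) \<or> (\<forall>y\<in>R. aff_form p y \<ge> 0))"

lemma sign_constant_on_subset:
  "sign_constant_on E' R \<Longrightarrow> E \<subseteq> E' \<Longrightarrow> sign_constant_on E R"
  by (auto simp: sign_constant_on_def)

lemma face_of_Int_common_zeros:
  fixes Q :: "'v::euclidean_space set"
  assumes "convex Q" and "sign_constant_on E Q"
  shows "(Q \<inter> common_zeros E) face_of Q"
proof -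
  have "Q \<inter> common_zeros E = \<Inter>(insert Q ((\<lambda>p. Q \<inter> {y. fst p \<bullet> y = snd p}) ` E))"
    by (auto simp: common_zeros_def aff_form_def)
  also have "\<dots> face_of Q"
  proof (rule face_of_Inter)
    fix T assume "T \<in> insert Q ((\<lambda>p. Q \<inter> {y. fst p \<bullet> y = snd p}) ` E)"
    then consider "T = Q" | p where "p \<in> E" "T = Q \<inter> {y. fst p \<bullet> y = snd p}"
      by blast
    then show "T face_of Q"
    proof cases
      case 1
      then show ?thesis
        using assms(1) face_of_refl by blast
    next
      case 2
      then consider "\<forall>y\<in>Q. fst p \<bullet> y \<le> snd p" | "\<forall>y\<in>Q. fst p \<bullet> y \<ge> snd p"
        using assms(2) by (force simp: sign_constant_on_def aff_form_def)
      then show ?thesis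
        using assms(1) 2(2)
        by cases
          (auto intro: face_of_Int_supporting_hyperplane_le face_of_Int_supporting_hyperplane_ge)
    qed
  qed auto
  finally show ?thesis .
qed

lemma aff_form_le_0_rel_interior_eq_0:
  fixes F :: "'v::euclidean_space set"
  assumes "convex F" "x \<in> rel_interior F" "\<forall>z\<in>F. aff_form p z \<le> 0" "aff_form p x = 0"
  shows "\<forall>z\<in>F. aff_form p z = 0"
proof -
  have "(F \<inter> common_zeros {p}) face_of F"
    using assms by (intro face_of_Int_common_zeros) (auto simp: sign_constant_on_def)
  moreover have "x \<in> F \<inter> common_zeros {p}"
    using assms rel_interior_subset by (auto simp: common_zeros_def)
  ultimately have "F \<subseteq> common_zeros {p}"
    using subset_of_face_of[of _ F F] assms(2) by blast
  then show ?thesis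
    by (auto simp: common_zeros_def)
qed

lemma mem_rel_interior_hpoly:
  fixes A :: "'v::euclidean_space set"
  assumes A: "affine A" and D: "finite D"
    and x: "x \<in> A \<inter> hpoly D \<inter> common_zeros E" and strict: "\<forall>p\<in>D - E. aff_form p x < 0"
  shows "x \<in> rel_interior (A \<inter> hpoly D \<inter> common_zeros E)"
proof -
  define Q where "Q = A \<inter> hpoly D \<inter> common_zeros E"
  define W where "W = (\<Inter>p\<in>D - E. {y. fst p \<bullet> y < snd p})"
  have "open W" "x \<in> W"
    using D strict by (auto simp: W_def aff_form_def intro!: open_INT open_halfspace_lt)
  then obtain e where e: "e > 0" "ball x e \<subseteq> W"
    using open_contains_ball by blast
  have "affine (A \<inter> common_zeros E)"
    using A affine_common_zeros by (rule affine_Int)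
  then have hull: "affine hull Q \<subseteq> A \<inter> common_zeros E"
    unfolding Q_def by (intro hull_minimal) auto
  have "ball x e \<inter> affine hull Q \<subseteq> Q"
  proof
    fix y assume y: "y \<in> ball x e \<inter> affine hull Q"
    have "aff_form p y \<le> 0" if "p \<in> D" for p
    proof (cases "p \<in> E")
      case True
      then show ?thesis
        using y hull by (auto simp: common_zeros_def)
    next
      case False
      have "y \<in> W"
        using y e by auto
      then have "fst p \<bullet> y < snd p"
        using False that unfolding W_def by blast
      then show ?thesis
        by (simp add: aff_form_def)
    qed
    then show "y \<in> Q"
      using y hull by (auto simp: Q_def hpoly_def)
  qed
  then show ?thesis
    using x e(1) by (auto simp: Q_def mem_rel_interior_ball)
qed

text \<open>The constraints that are not active on the face are strict at a relative interior point
of it.\<close>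

lemma face_eq_active_constraints:
  fixes A :: "'v::euclidean_space set"
  assumes A: "affine A" and D: "finite D"
    and F: "F face_of (A \<inter> hpoly D)" and Fne: "F \<noteq> {}"
  shows "F = A \<inter> hpoly D \<inter> common_zeros (active D F)"
proof
  show "F \<subseteq> A \<inter> hpoly D \<inter> common_zeros (active D F)"
    using face_of_imp_subset[OF F] subset_common_zeros_active by blast
next
  have FQ: "F \<subseteq> A \<inter> hpoly D"
    using F face_of_imp_subset by blast
  obtain x where x: "x \<in> rel_interior F"
    using F Fne face_of_imp_convex rel_interior_eq_empty by blast
  then have xF: "x \<in> F"
    using rel_interior_subset by blast
  have "aff_form p x < 0" if "p \<in> D - active D F" for p
  proof -
    have le: "\<forall>z\<in>F. aff_form p z \<le> 0"
      using FQ that by (auto simp: hpoly_def)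
    moreover have "aff_form p x \<noteq> 0"
      using aff_form_le_0_rel_interior_eq_0[OF face_of_imp_convex[OF F] x le] that
      by (auto simp: active_def)
    ultimately show ?thesis
      using xF by force
  qed
  moreover have "x \<in> A \<inter> hpoly D \<inter> common_zeros (active D F)"
    using xF FQ subset_common_zeros_active by blast
  ultimately have "x \<in> rel_interior (A \<inter> hpoly D \<inter> common_zeros (active D F))"
    using mem_rel_interior_hpoly[OF A D] by blast
  moreover have "A \<inter> hpoly D \<inter> common_zeros (active D F) \<subseteq> A \<inter> hpoly D"
    by blast
  ultimately show "A \<inter> hpoly D \<inter> common_zeros (active D F) \<subseteq> F"
    using subset_of_face_of[OF F] xF by blast
qed

section \<open>Sign cells of a finite arrangement\<close>

definition sign_vectors :: "('v::euclidean_space \<times> real) set \<Rightarrow> ('v \<times> real \<Rightarrow> int) set" where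
  "sign_vectors J = J \<rightarrow>\<^sub>E {-1, 0, 1}"

definition sign_compatible :: "int \<Rightarrow> real \<Rightarrow> bool" where
  "sign_compatible e t \<longleftrightarrow> (e = -1 \<longrightarrow> t \<le> 0) \<and> (e = 1 \<longrightarrow> t \<ge> 0) \<and> (e = 0 \<longrightarrow> t = 0)"

definition sign_cell :: "('v::euclidean_space \<times> real) set \<Rightarrow> ('v \<times> real \<Rightarrow> int) \<Rightarrow> 'v set" where
  "sign_cell J s = {y. \<forall>j\<in>J. sign_compatible (s j) (aff_form j y)}"

definition sign_constraints ::
  "('v::euclidean_space \<times> real) set \<Rightarrow> ('v \<times> real \<Rightarrow> int) \<Rightarrow> ('v \<times> real) set" where
  "sign_constraints J s = {j\<in>J. s j \<noteq> 1} \<union> neg_form ` {j\<in>J. s j \<noteq> -1}"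

definition sign_vector_of :: "('v::euclidean_space \<times> real) set \<Rightarrow> 'v \<Rightarrow> ('v \<times> real \<Rightarrow> int)" where
  "sign_vector_of J y =
     restrict (\<lambda>j. if aff_form j y < 0 then -1 else if aff_form j y > 0 then 1 else 0) J"

lemma sign_compatible_iff:
  "e \<in> {-1, 0, 1} \<Longrightarrow> sign_compatible e t \<longleftrightarrow> (e \<noteq> 1 \<longrightarrow> t \<le> 0) \<and> (e \<noteq> -1 \<longrightarrow> t \<ge> 0)"
  by (auto simp: sign_compatible_def)

lemma sign_compatible_sign_constant:
  "e \<in> {-1, 0, 1} \<Longrightarrow> (\<forall>y\<in>R. sign_compatible e (f y)) \<Longrightarrow> (\<forall>y\<in>R. f y \<le> 0) \<or> (\<forall>y\<in>R. f y \<ge> 0)"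
  by (auto simp: sign_compatible_def)

lemma sign_compatible_other:
  "e \<in> {-1, 0, 1} \<Longrightarrow> e' \<in> {-1, 0, 1} \<Longrightarrow> sign_compatible e t \<Longrightarrow>
    sign_compatible e' t \<longleftrightarrow> (e \<noteq> e' \<longrightarrow> t = 0)"
  by (auto simp: sign_compatible_def)

lemma sign_vectors_mem: "s \<in> sign_vectors J \<Longrightarrow> j \<in> J \<Longrightarrow> s j \<in> {-1, 0, 1}"
  unfolding sign_vectors_def by (rule PiE_mem)

lemma finite_sign_vectors: "finite J \<Longrightarrow> finite (sign_vectors J)"
  unfolding sign_vectors_def by (intro finite_PiE) auto

lemma finite_sign_constraints: "finite J \<Longrightarrow> finite (sign_constraints J s)"
  unfolding sign_constraints_def by auto

lemma sign_vector_of: "sign_vector_of J y \<in> sign_vectors J" "y \<in> sign_cell J (sign_vector_of J y)"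
  unfolding sign_vector_of_def sign_vectors_def sign_cell_def sign_compatible_def by auto

lemma sign_cell_eq_hpoly:
  assumes "s \<in> sign_vectors J"
  shows "sign_cell J s = hpoly (sign_constraints J s)"
proof -
  have "y \<in> sign_cell J s \<longleftrightarrow>
      (\<forall>j\<in>J. (s j \<noteq> 1 \<longrightarrow> aff_form j y \<le> 0) \<and> (s j \<noteq> -1 \<longrightarrow> aff_form j y \<ge> 0))" for y
    unfolding sign_cell_def mem_Collect_eq
    by (rule ball_cong[OF refl sign_compatible_iff[OF sign_vectors_mem[OF assms]]])
  then show ?thesis
    by (auto simp: hpoly_def sign_constraints_def ball_Un)
qed

lemma convex_sign_cell: "s \<in> sign_vectors J \<Longrightarrow> convex (sign_cell J s)"
  by (simp add: sign_cell_eq_hpoly convex_hpoly)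

lemma closed_sign_cell: "s \<in> sign_vectors J \<Longrightarrow> closed (sign_cell J s)"
  by (simp add: sign_cell_eq_hpoly closed_hpoly)

lemma polyhedron_sign_cell: "finite J \<Longrightarrow> s \<in> sign_vectors J \<Longrightarrow> polyhedron (sign_cell J s)"
  by (simp add: sign_cell_eq_hpoly polyhedron_hpoly finite_sign_constraints)

lemma sign_constant_on_sign_cell:
  assumes "s \<in> sign_vectors J" "R \<subseteq> sign_cell J s"
  shows "sign_constant_on J R"
  unfolding sign_constant_on_def
proof
  fix j assume j: "j \<in> J"
  have "\<forall>y\<in>R. sign_compatible (s j) (aff_form j y)"
    using assms(2) j unfolding sign_cell_def by blast
  then show "(\<forall>y\<in>R. aff_form j y \<le> 0) \<or> (\<forall>y\<in>R. aff_form j y \<ge> 0)"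
    by (rule sign_compatible_sign_constant[OF sign_vectors_mem[OF assms(1) j]])
qed

lemma sign_cell_Int_common_zeros:
  assumes "s \<in> sign_vectors J" "Z \<subseteq> J"
  obtains s' where "s' \<in> sign_vectors J" "sign_cell J s \<inter> common_zeros Z = sign_cell J s'"
proof
  let ?s' = "restrict (\<lambda>j. if j \<in> Z then 0 else s j) J"
  show "?s' \<in> sign_vectors J"
    using assms(1) by (auto simp: sign_vectors_def PiE_iff)
  show "sign_cell J s \<inter> common_zeros Z = sign_cell J ?s'"
    using assms(2) by (auto simp: sign_cell_def common_zeros_def sign_compatible_def)
qed

lemma sign_cell_Int:
  assumes "s1 \<in> sign_vectors J" "s2 \<in> sign_vectors J"
  shows "sign_cell J s1 \<inter> sign_cell J s2 = sign_cell J s1 \<inter> common_zeros {j\<in>J. s1 j \<noteq> s2 j}"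
proof -
  have "y \<in> sign_cell J s2 \<longleftrightarrow> (\<forall>j\<in>J. s1 j \<noteq> s2 j \<longrightarrow> aff_form j y = 0)"
    if "y \<in> sign_cell J s1" for y
    using that sign_compatible_other[OF sign_vectors_mem[OF assms(1)] sign_vectors_mem[OF assms(2)]]
    unfolding sign_cell_def by blast
  then show ?thesis
    unfolding common_zeros_def by blast
qed

lemma face_of_sign_cell_Int:
  assumes "s1 \<in> sign_vectors J" "s2 \<in> sign_vectors J"
  shows "(sign_cell J s1 \<inter> sign_cell J s2) face_of sign_cell J s1"
  unfolding sign_cell_Int[OF assms] using assms
  by (intro face_of_Int_common_zeros convex_sign_cell)
     (auto intro: sign_constant_on_subset[OF sign_constant_on_sign_cell])

lemma common_zeros_active_cong:
  assumes "\<And>j. j \<in> A \<Longrightarrow> \<exists>p\<in>B. \<forall>y. aff_form p y = 0 \<longleftrightarrow> aff_form j y = 0"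
    and "\<And>p. p \<in> B \<Longrightarrow> \<exists>j\<in>A. \<forall>y. aff_form j y = 0 \<longleftrightarrow> aff_form p y = 0"
  shows "common_zeros (active A F) = common_zeros (active B F)"
proof -
  have "common_zeros (active B F) \<subseteq> common_zeros (active A F)"
    if same_zeros: "\<And>j. j \<in> A \<Longrightarrow> \<exists>p\<in>B. \<forall>y. aff_form p y = 0 \<longleftrightarrow> aff_form j y = 0" for A B
  proof
    fix y assume y: "y \<in> common_zeros (active B F)"
    have "aff_form j y = 0" if "j \<in> active A F" for j
    proof -
      obtain p where p: "p \<in> B" "\<forall>y. aff_form p y = 0 \<longleftrightarrow> aff_form j y = 0"
        using same_zeros \<open>j \<in> active A F\<close> unfolding active_def by blast
      then have "p \<in> active B F"
        using that by (simp add: active_def)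
      then show ?thesis
        using y p(2) unfolding common_zeros_def by blast
    qed
    then show "y \<in> common_zeros (active A F)"
      by (simp add: common_zeros_def)
  qed
  then show ?thesis
    using assms by blast
qed

lemma common_zeros_active_sign_constraints:
  assumes "s \<in> sign_vectors J"
  shows "common_zeros (active (sign_constraints J s) F) = common_zeros (active J F)"
proof -
  have forms: "\<exists>p\<in>sign_constraints J s. \<forall>y. aff_form p y = 0 \<longleftrightarrow> aff_form j y = 0"
    if "j \<in> J" for j
  proof (cases "s j = 1")
    case True
    then have "neg_form j \<in> sign_constraints J s"
      using that by (auto simp: sign_constraints_def)
    then show ?thesis
      by (rule bexI[rotated]) simp
  next
    case False
    then show ?thesis
      using that by (auto simp: sign_constraints_def)
  qed
  have constraints: "\<exists>j\<in>J. \<forall>y. aff_form j y = 0 \<longleftrightarrow> aff_form p y = 0"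
    if "p \<in> sign_constraints J s" for p
    using that by (auto simp: sign_constraints_def)
  show ?thesis
    using common_zeros_active_cong[OF forms constraints] by (rule sym)
qed

lemma Int_sign_cell_eq_hpoly:
  assumes "Q = affine hull Q \<inter> hpoly C" "s \<in> sign_vectors J"
  shows "Q \<inter> sign_cell J s = affine hull Q \<inter> hpoly (C \<union> sign_constraints J s)"
  using assms by (subst assms(1)) (auto simp: sign_cell_eq_hpoly)

lemma face_of_Int_sign_cell_eq:
  fixes Q :: "'v::euclidean_space set"
  assumes Q: "Q = affine hull Q \<inter> hpoly C" "finite C" and J: "finite J" "s \<in> sign_vectors J"
    and F: "F face_of (Q \<inter> sign_cell J s)" "F \<noteq> {}"
  shows "F = (Q \<inter> common_zeros (active C F)) \<inter> (sign_cell J s \<inter> common_zeros (active J F))"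
proof -
  note QK = Int_sign_cell_eq_hpoly[OF Q(1) J(2)]
  have "F = affine hull Q \<inter> hpoly (C \<union> sign_constraints J s) \<inter>
            common_zeros (active (C \<union> sign_constraints J s) F)"
    using Q(2) J(1) finite_sign_constraints
    by (intro face_eq_active_constraints[OF affine_affine_hull _ F(1)[unfolded QK] F(2)]) blast
  also have "\<dots> = (Q \<inter> common_zeros (active C F)) \<inter> (sign_cell J s \<inter> common_zeros (active J F))"
    using QK common_zeros_active_sign_constraints[OF J(2)] by auto
  finally show ?thesis .
qed

lemma face_of_Int_sign_cell:
  fixes Q :: "'v::euclidean_space set"
  assumes Q: "polyhedron Q" and J: "finite J" "s \<in> sign_vectors J"
    and F: "F face_of (Q \<inter> sign_cell J s)"
  obtains G s' where "G face_of Q" "s' \<in> sign_vectors J" "F = G \<inter> sign_cell J s'"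
proof (cases "F = {}")
  case True
  then show thesis
    using that[of "{}" s] J by simp
next
  case False
  obtain C where C: "finite C" "Q = affine hull Q \<inter> hpoly C"
    using polyhedron_hpoly_representation[OF Q] by blast
  obtain s' where s': "s' \<in> sign_vectors J"
    "sign_cell J s \<inter> common_zeros (active J F) = sign_cell J s'"
    using sign_cell_Int_common_zeros[OF J(2), of "active J F"] by (auto simp: active_def)
  have "sign_constant_on (active C F) Q"
    using C(2) by (auto simp: sign_constant_on_def active_def hpoly_def)
  then have "(Q \<inter> common_zeros (active C F)) face_of Q"
    using Q polyhedron_imp_convex face_of_Int_common_zeros by blast
  then show thesis
    using that s' face_of_Int_sign_cell_eq[OF C(2,1) J F False] by metis
qed

lemma active_form_separates:
  fixes Q :: "'v::euclidean_space set"
  assumes Q: "Q = affine hull Q \<inter> hpoly C" "C \<subseteq> J" and J: "finite J" "s \<in> sign_vectors J"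
    and T: "T face_of (Q \<inter> sign_cell J s)" "T \<noteq> {}" "T \<noteq> Q \<inter> sign_cell J s"
  shows "\<exists>j\<in>J. (\<forall>z\<in>T. aff_form j z = 0) \<and> (\<exists>y\<in>Q \<inter> sign_cell J s. aff_form j y \<noteq> 0)"
proof (rule ccontr)
  assume "\<not> ?thesis"
  then have "Q \<inter> sign_cell J s \<subseteq> common_zeros (active J T)"
    by (auto simp: common_zeros_def active_def)
  moreover have "common_zeros (active J T) \<subseteq> common_zeros (active C T)"
    using Q(2) by (intro common_zeros_antimono active_mono)
  moreover have "T = (Q \<inter> common_zeros (active C T)) \<inter> (sign_cell J s \<inter> common_zeros (active J T))"
    using Q J T finite_subset by (intro face_of_Int_sign_cell_eq) auto
  ultimately have "Q \<inter> sign_cell J s \<subseteq> T"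
    by blast
  then show False
    using T face_of_imp_subset by blast
qed

section \<open>The crease function of an arrangement\<close>

definition crease_fun :: "('v::euclidean_space \<times> real) set \<Rightarrow> 'v \<Rightarrow> real" where
  "crease_fun J y = (\<Sum>j\<in>J. min (aff_form j y) 0)"

definition neg_forms :: "('v::euclidean_space \<times> real) set \<Rightarrow> 'v set \<Rightarrow> ('v \<times> real) set" where
  "neg_forms J R = {j\<in>J. \<exists>y\<in>R. aff_form j y < 0}"

lemma min_0_convex_comb_le:
  fixes a b u v :: real
  assumes "0 \<le> u" "0 \<le> v"
  shows "u * min a 0 + v * min b 0 \<le> min (u * a + v * b) 0"
proof -
  have "u * min a 0 \<le> u * a" "v * min b 0 \<le> v * b" "u * min a 0 \<le> 0" "v * min b 0 \<le> 0"
    using assms by (auto intro!: mult_left_mono mult_nonneg_nonpos)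
  then show ?thesis
    by linarith
qed

lemma concave_on_crease_fun: "concave_on S (crease_fun J) \<longleftrightarrow> convex S"
proof -
  have "u * crease_fun J x + v * crease_fun J y \<le> crease_fun J (u *\<^sub>R x + v *\<^sub>R y)"
    if "0 \<le> u" "0 \<le> v" "u + v = 1" for u v x y
  proof -
    have "u * crease_fun J x + v * crease_fun J y =
        (\<Sum>j\<in>J. u * min (aff_form j x) 0 + v * min (aff_form j y) 0)"
      by (simp add: crease_fun_def sum.distrib sum_distrib_left)
    also have "\<dots> \<le> crease_fun J (u *\<^sub>R x + v *\<^sub>R y)"
      unfolding crease_fun_def aff_form_convex_comb[OF that(3)]
      using that by (intro sum_mono min_0_convex_comb_le)
    finally show ?thesis .
  qed
  then show ?thesis
    by (auto simp: concave_on_iff)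
qed

lemma convex_concave_ge_affine:
  fixes f :: "'v::euclidean_space \<Rightarrow> real"
  assumes "concave_on S f"
  shows "convex {y\<in>S. a \<bullet> y + b \<le> f y}"
  unfolding convex_alt
proof (intro ballI allI impI)
  fix x y and u :: real
  assume x: "x \<in> {y\<in>S. a \<bullet> y + b \<le> f y}" and y: "y \<in> {y\<in>S. a \<bullet> y + b \<le> f y}"
    and u: "0 \<le> u \<and> u \<le> 1"
  have "a \<bullet> ((1 - u) *\<^sub>R x + u *\<^sub>R y) + b = (1 - u) * (a \<bullet> x + b) + u * (a \<bullet> y + b)"
    by (simp add: inner_add_right algebra_simps)
  also have "\<dots> \<le> (1 - u) * f x + u * f y"
    using x y u by (intro add_mono mult_left_mono) auto
  also have "\<dots> \<le> f ((1 - u) *\<^sub>R x + u *\<^sub>R y)"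
    using concave_onD[OF assms] x y u by auto
  finally show "(1 - u) *\<^sub>R x + u *\<^sub>R y \<in> {y\<in>S. a \<bullet> y + b \<le> f y}"
    using x y u concave_on_imp_convex[OF assms] by (auto simp: convex_alt)
qed

lemma convex_hypograph:
  assumes "concave_on S f"
  shows "convex {(y, t). y \<in> S \<and> t \<le> f y}"
  unfolding convex_alt
proof (intro ballI allI impI)
  fix p q and u :: real
  assume p: "p \<in> {(y, t). y \<in> S \<and> t \<le> f y}" and q: "q \<in> {(y, t). y \<in> S \<and> t \<le> f y}"
    and u: "0 \<le> u \<and> u \<le> 1"
  have "(1 - u) * snd p + u * snd q \<le> (1 - u) * f (fst p) + u * f (fst q)"
    using p q u by (intro add_mono mult_left_mono) (auto simp: case_prod_beta)
  also have "\<dots> \<le> f ((1 - u) *\<^sub>R fst p + u *\<^sub>R fst q)"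
    using concave_onD[OF assms] p q u by (auto simp: case_prod_beta)
  finally show "(1 - u) *\<^sub>R p + u *\<^sub>R q \<in> {(y, t). y \<in> S \<and> t \<le> f y}"
    using p q u concave_on_imp_convex[OF assms] by (auto simp: convex_alt case_prod_beta)
qed

text \<open>At a sign change of a form its summand is strictly concave.\<close>

lemma crease_fun_affine_imp_sign_constant:
  assumes J: "finite J" and R: "convex R" and affine_on: "\<forall>y\<in>R. crease_fun J y = a \<bullet> y + b"
  shows "sign_constant_on J R"
  unfolding sign_constant_on_def
proof (rule ballI, rule ccontr)
  fix j assume j: "j \<in> J" and "\<not> ((\<forall>y\<in>R. aff_form j y \<le> 0) \<or> (\<forall>y\<in>R. aff_form j y \<ge> 0))"
  then obtain y1 y2 where y: "y1 \<in> R" "y2 \<in> R" "aff_form j y1 > 0" "aff_form j y2 < 0"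
    by (auto simp: not_le)
  define t where "t = aff_form j y1 / (aff_form j y1 - aff_form j y2)"
  have t: "0 < t" "t < 1"
    using y unfolding t_def by (auto simp: field_simps)
  define z where "z = (1 - t) *\<^sub>R y1 + t *\<^sub>R y2"
  have comb: "aff_form i z = (1 - t) * aff_form i y1 + t * aff_form i y2" for i
    unfolding z_def by (rule aff_form_convex_comb) simp
  have "aff_form j z = 0"
    unfolding comb t_def using y by (simp add: field_simps)
  then have strict:
    "(1 - t) * min (aff_form j y1) 0 + t * min (aff_form j y2) 0 < min (aff_form j z) 0"
    using y t by (simp add: mult_pos_neg)
  have le: "(1 - t) * min (aff_form i y1) 0 + t * min (aff_form i y2) 0 \<le> min (aff_form i z) 0"
    for i
    unfolding comb using t by (intro min_0_convex_comb_le) auto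
  have "(\<Sum>i\<in>J. (1 - t) * min (aff_form i y1) 0 + t * min (aff_form i y2) 0) <
      (\<Sum>i\<in>J. min (aff_form i z) 0)"
    using j le strict by (intro sum_strict_mono_ex1[OF J]) blast+
  then have "(1 - t) * crease_fun J y1 + t * crease_fun J y2 < crease_fun J z"
    by (simp add: crease_fun_def sum.distrib sum_distrib_left)
  moreover have "z \<in> R"
    using R y t unfolding z_def convex_alt by auto
  then have "crease_fun J z = (1 - t) * crease_fun J y1 + t * crease_fun J y2"
    using affine_on y unfolding z_def by (simp add: inner_add_right algebra_simps)
  ultimately show False
    by simp
qed

lemma crease_fun_eq_sum_neg_forms:
  assumes J: "finite J" and sg: "sign_constant_on J R" and y: "y \<in> R"
  shows "crease_fun J y = (\<Sum>j\<in>neg_forms J R. aff_form j y)"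
proof -
  have "min (aff_form j y) 0 = (if j \<in> neg_forms J R then aff_form j y else 0)" if j: "j \<in> J" for j
  proof (cases "j \<in> neg_forms J R")
    case True
    then have "\<forall>y\<in>R. aff_form j y \<le> 0"
      using sg j by (force simp: neg_forms_def sign_constant_on_def)
    then show ?thesis
      using True y by auto
  next
    case False
    then have "\<forall>y\<in>R. aff_form j y \<ge> 0"
      using j by (auto simp: neg_forms_def not_less)
    then show ?thesis
      using False y by auto
  qed
  then have "crease_fun J y = (\<Sum>j\<in>J. if j \<in> neg_forms J R then aff_form j y else 0)"
    unfolding crease_fun_def by (rule sum.cong[OF refl])
  also have "\<dots> = (\<Sum>j\<in>neg_forms J R. aff_form j y)"
    using J by (simp add: sum.If_cases neg_forms_def Int_def)
  finally show ?thesis .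
qed

lemma subset_sign_cell_if_sign_constant:
  assumes "sign_constant_on J R"
  obtains s where "s \<in> sign_vectors J" "R \<subseteq> sign_cell J s"
proof
  let ?s = "restrict (\<lambda>j. if \<forall>y\<in>R. aff_form j y = 0 then 0
                          else if \<forall>y\<in>R. aff_form j y \<le> 0 then -1 else 1) J"
  show "?s \<in> sign_vectors J"
    by (auto simp: sign_vectors_def)
  show "R \<subseteq> sign_cell J ?s"
    using assms by (auto simp: sign_cell_def sign_compatible_def sign_constant_on_def)
qed

lemma crease_fun_affine_on_sign_cell:
  assumes "finite J" "s \<in> sign_vectors J"
  obtains a b where "\<forall>y\<in>sign_cell J s. crease_fun J y = a \<bullet> y - b"
proof
  show "\<forall>y\<in>sign_cell J s. crease_fun J y =
      (\<Sum>j\<in>neg_forms J (sign_cell J s). fst j) \<bullet> y - (\<Sum>j\<in>neg_forms J (sign_cell J s). snd j)"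
    using assms sign_constant_on_sign_cell[OF assms(2) order_refl]
    by (simp add: crease_fun_eq_sum_neg_forms sum_aff_form)
qed

lemma min_0_le_sign_weight: "e \<in> {-1, 0, 1} \<Longrightarrow> min t 0 \<le> (1 - real_of_int e) / 2 * t"
  by auto

lemma min_0_eq_sign_weight_iff:
  "e \<in> {-1, 0, 1} \<Longrightarrow> min t 0 = (1 - real_of_int e) / 2 * t \<longleftrightarrow> sign_compatible e t"
  by (auto simp: sign_compatible_def)

lemma sign_cell_linearity_domain:
  fixes \<iota> :: "'a \<Rightarrow> 'v::euclidean_space"
  assumes J: "finite J" and s: "s \<in> sign_vectors J"
  shows "\<sigma> \<inter> \<iota> -` sign_cell J s \<in> linearity_domains \<iota> (\<lambda>x. crease_fun J (\<iota> x)) \<sigma>"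
proof -
  define w where "w j = (1 - real_of_int (s j)) / 2" for j
  define a where "a = (\<Sum>j\<in>J. w j *\<^sub>R fst j)"
  define b where "b = - (\<Sum>j\<in>J. w j * snd j)"
  have affine: "a \<bullet> y + b = (\<Sum>j\<in>J. w j * aff_form j y)" for y
    unfolding a_def b_def aff_form_def by (simp add: inner_sum_left sum_subtractf algebra_simps)
  have le: "min (aff_form j y) 0 \<le> w j * aff_form j y" if "j \<in> J" for j y
    unfolding w_def using sign_vectors_mem[OF s that] by (rule min_0_le_sign_weight)
  have eq_iff: "min (aff_form j y) 0 = w j * aff_form j y \<longleftrightarrow> sign_compatible (s j) (aff_form j y)"
    if "j \<in> J" for j y
    unfolding w_def using sign_vectors_mem[OF s that] by (rule min_0_eq_sign_weight_iff)
  have "crease_fun J (\<iota> x) = a \<bullet> \<iota> x + b" if "x \<in> \<sigma> \<inter> \<iota> -` sign_cell J s" for x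
    unfolding affine crease_fun_def using that eq_iff
    by (intro sum.cong) (auto simp: sign_cell_def)
  moreover have "crease_fun J (\<iota> x) < a \<bullet> \<iota> x + b" if x: "x \<in> \<sigma> - \<sigma> \<inter> \<iota> -` sign_cell J s" for x
  proof -
    obtain j where j: "j \<in> J" "\<not> sign_compatible (s j) (aff_form j (\<iota> x))"
      using x unfolding sign_cell_def by blast
    then have "min (aff_form j (\<iota> x)) 0 < w j * aff_form j (\<iota> x)"
      using le[OF j(1)] eq_iff[OF j(1)] by (simp add: order.strict_iff_order)
    then show ?thesis
      unfolding affine crease_fun_def using le j(1)
      by (intro sum_strict_mono_ex1[OF J]) blast+
  qed
  ultimately show ?thesis
    unfolding linearity_domains_def by blast
qed

text \<open>The contact set of an affine majorant is convex, so the crease function is affine on it;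
hence it lies in a sign cell, where it is cut out by a supporting hyperplane.\<close>

lemma contact_set_face_of_Int_sign_cell:
  fixes Q :: "'v::euclidean_space set"
  assumes J: "finite J" and cvx: "convex Q" and le: "\<forall>y\<in>Q. crease_fun J y \<le> a \<bullet> y + b"
  obtains s where "s \<in> sign_vectors J"
    "{y\<in>Q. a \<bullet> y + b \<le> crease_fun J y} face_of (Q \<inter> sign_cell J s)"
proof -
  define R where "R = {y\<in>Q. a \<bullet> y + b \<le> crease_fun J y}"
  have R_eq: "\<forall>y\<in>R. crease_fun J y = a \<bullet> y + b"
    using le unfolding R_def by (blast intro: order.antisym)
  have "convex R"
    unfolding R_def using cvx by (intro convex_concave_ge_affine) (simp add: concave_on_crease_fun)
  then obtain s where s: "s \<in> sign_vectors J" "R \<subseteq> sign_cell J s"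
    using crease_fun_affine_imp_sign_constant[OF J _ R_eq] subset_sign_cell_if_sign_constant
    by blast
  obtain a' b' where affine: "\<forall>y\<in>sign_cell J s. crease_fun J y = a' \<bullet> y - b'"
    using crease_fun_affine_on_sign_cell[OF J s(1)] by blast
  have "R = (Q \<inter> sign_cell J s) \<inter> {y. (a - a') \<bullet> y = - (b + b')}"
  proof (intro set_eqI iffI)
    fix y assume y: "y \<in> R"
    then have "y \<in> Q" "y \<in> sign_cell J s"
      using s(2) by (auto simp: R_def)
    moreover have "a \<bullet> y + b = a' \<bullet> y - b'"
      using y \<open>y \<in> sign_cell J s\<close> R_eq affine by metis
    ultimately show "y \<in> (Q \<inter> sign_cell J s) \<inter> {y. (a - a') \<bullet> y = - (b + b')}"
      by (simp add: inner_diff_left)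
  next
    fix y assume y: "y \<in> (Q \<inter> sign_cell J s) \<inter> {y. (a - a') \<bullet> y = - (b + b')}"
    then have "crease_fun J y = a \<bullet> y + b"
      using affine by (simp add: inner_diff_left)
    then show "y \<in> R"
      using y by (simp add: R_def)
  qed
  moreover have "(a - a') \<bullet> y \<ge> - (b + b')" if "y \<in> Q \<inter> sign_cell J s" for y
  proof -
    have "crease_fun J y = a' \<bullet> y - b'" "crease_fun J y \<le> a \<bullet> y + b"
      using that affine le by blast+
    then show ?thesis
      by (simp add: inner_diff_left)
  qed
  then have "(Q \<inter> sign_cell J s) \<inter> {y. (a - a') \<bullet> y = - (b + b')} face_of (Q \<inter> sign_cell J s)"
    using cvx convex_sign_cell[OF s(1)] by (intro face_of_Int_supporting_hyperplane_ge convex_Int)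
  ultimately show thesis
    using that s(1) unfolding R_def by metis
qed

lemma linearity_domain_sign_cell:
  fixes \<iota> :: "'a \<Rightarrow> 'v::euclidean_space"
  assumes J: "finite J" and poly: "polyhedron (\<iota> ` \<sigma>)"
    and \<rho>: "\<rho> \<in> linearity_domains \<iota> (\<lambda>x. crease_fun J (\<iota> x)) \<sigma>"
  obtains G s where "G face_of \<iota> ` \<sigma>" "s \<in> sign_vectors J" "\<rho> = (\<sigma> \<inter> \<iota> -` G) \<inter> \<iota> -` sign_cell J s"
proof -
  obtain a b where \<rho>\<sigma>: "\<rho> \<subseteq> \<sigma>" and eq: "\<forall>x\<in>\<rho>. crease_fun J (\<iota> x) = a \<bullet> \<iota> x + b"
    and less: "\<forall>x\<in>\<sigma> - \<rho>. crease_fun J (\<iota> x) < a \<bullet> \<iota> x + b"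
    using \<rho> unfolding linearity_domains_def by blast
  define R where "R = {y\<in>\<iota> ` \<sigma>. a \<bullet> y + b \<le> crease_fun J y}"
  have le: "crease_fun J y \<le> a \<bullet> y + b" if y: "y \<in> \<iota> ` \<sigma>" for y
  proof -
    obtain x where "x \<in> \<sigma>" "y = \<iota> x"
      using y by blast
    then show ?thesis
      using eq less by (cases "x \<in> \<rho>") (auto intro: less_imp_le)
  qed
  have \<rho>R: "\<rho> = \<sigma> \<inter> \<iota> -` R"
  proof (intro set_eqI iffI)
    fix x assume "x \<in> \<sigma> \<inter> \<iota> -` R"
    then show "x \<in> \<rho>"
      using less unfolding R_def
      by (metis (mono_tags, lifting) DiffI IntD1 IntD2 mem_Collect_eq not_le vimageE)
  next
    fix x assume x: "x \<in> \<rho>"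
    then have "x \<in> \<sigma>" "crease_fun J (\<iota> x) = a \<bullet> \<iota> x + b"
      using \<rho>\<sigma> eq by blast+
    then show "x \<in> \<sigma> \<inter> \<iota> -` R"
      unfolding R_def by simp
  qed
  obtain s where s: "s \<in> sign_vectors J" "R face_of (\<iota> ` \<sigma> \<inter> sign_cell J s)"
    using contact_set_face_of_Int_sign_cell[OF J polyhedron_imp_convex[OF poly]] le
    unfolding R_def by blast
  obtain G s' where "G face_of \<iota> ` \<sigma>" "s' \<in> sign_vectors J" "R = G \<inter> sign_cell J s'"
    using face_of_Int_sign_cell[OF poly J s] .
  then show thesis
    using that \<rho>R by blast
qed

section \<open>The subdivision into sign cells\<close>

definition sign_cells ::
  "('a \<Rightarrow> 'v::euclidean_space) \<Rightarrow> 'a set set \<Rightarrow> ('v \<times> real) set \<Rightarrow> 'a set set" where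
  "sign_cells \<iota> P J = {\<sigma> \<inter> \<iota> -` sign_cell J s | \<sigma> s. \<sigma> \<in> P \<and> s \<in> sign_vectors J}"

lemma image_Int_vimage: "f ` (A \<inter> f -` B) = f ` A \<inter> B"
  by auto

lemma euclidean_complexD:
  assumes "euclidean_complex X \<iota> P"
  shows "\<Union>P = topspace X"
    and "\<forall>x\<in>topspace X. \<exists>W. openin X W \<and> x \<in> W \<and> finite {\<sigma>\<in>P. \<sigma> \<inter> W \<noteq> {}}"
    and "\<sigma> \<in> P \<Longrightarrow> closedin X \<sigma>"
    and "\<sigma> \<in> P \<Longrightarrow> polyhedron (\<iota> ` \<sigma>)"
    and "\<sigma> \<in> P \<Longrightarrow> inj_on \<iota> \<sigma>"
    and "\<sigma> \<in> P \<Longrightarrow> homeomorphic_map (subtopology X \<sigma>) (top_of_set (\<iota> ` \<sigma>)) \<iota>"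
    and "\<sigma> \<in> P \<Longrightarrow> F face_of (\<iota> ` \<sigma>) \<Longrightarrow> \<sigma> \<inter> \<iota> -` F \<in> P"
    and "\<sigma> \<in> P \<Longrightarrow> \<tau> \<in> P \<Longrightarrow> pface \<iota> (\<sigma> \<inter> \<tau>) \<sigma>"
  using assms unfolding euclidean_complex_def by blast+

lemma S_complex_crease_fun:
  assumes EC: "euclidean_complex X \<iota> P" and J: "finite J"
  shows "S_complex \<iota> P (\<lambda>x. crease_fun J (\<iota> x)) = sign_cells \<iota> P J"
proof (intro set_eqI iffI)
  fix \<rho> assume "\<rho> \<in> S_complex \<iota> P (\<lambda>x. crease_fun J (\<iota> x))"
  then obtain \<sigma> where \<sigma>: "\<sigma> \<in> P" "\<rho> \<in> linearity_domains \<iota> (\<lambda>x. crease_fun J (\<iota> x)) \<sigma>"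
    unfolding S_complex_def by blast
  obtain G s where G: "G face_of \<iota> ` \<sigma>" "s \<in> sign_vectors J" "\<rho> = (\<sigma> \<inter> \<iota> -` G) \<inter> \<iota> -` sign_cell J s"
    by (rule linearity_domain_sign_cell[OF J euclidean_complexD(4)[OF EC \<sigma>(1)] \<sigma>(2)])
  have "\<sigma> \<inter> \<iota> -` G \<in> P"
    using euclidean_complexD(7)[OF EC \<sigma>(1) G(1)] .
  then show "\<rho> \<in> sign_cells \<iota> P J"
    unfolding G(3) sign_cells_def using G(2) by blast
next
  fix \<rho> assume "\<rho> \<in> sign_cells \<iota> P J"
  then obtain \<sigma> s where \<sigma>: "\<sigma> \<in> P" "s \<in> sign_vectors J" and \<rho>: "\<rho> = \<sigma> \<inter> \<iota> -` sign_cell J s"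
    unfolding sign_cells_def by blast
  show "\<rho> \<in> S_complex \<iota> P (\<lambda>x. crease_fun J (\<iota> x))"
    unfolding \<rho> S_complex_def using \<sigma>(1) sign_cell_linearity_domain[OF J \<sigma>(2)] by blast
qed

lemma finite_restr_sign_cells:
  assumes "finite J" "finite (restr P W)"
  shows "finite (restr (sign_cells \<iota> P J) W)"
proof -
  have "restr (sign_cells \<iota> P J) W \<subseteq> (\<lambda>(\<sigma>, s). \<sigma> \<inter> \<iota> -` sign_cell J s) ` (restr P W \<times> sign_vectors J)"
  proof
    fix \<rho> assume "\<rho> \<in> restr (sign_cells \<iota> P J) W"
    then obtain \<sigma> s where "\<sigma> \<in> P" "s \<in> sign_vectors J" "\<rho> \<inter> W \<noteq> {}"
      and \<rho>: "\<rho> = \<sigma> \<inter> \<iota> -` sign_cell J s"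
      unfolding restr_def sign_cells_def by blast
    then have "(\<sigma>, s) \<in> restr P W \<times> sign_vectors J"
      unfolding restr_def by auto
    then show "\<rho> \<in> (\<lambda>(\<sigma>, s). \<sigma> \<inter> \<iota> -` sign_cell J s) ` (restr P W \<times> sign_vectors J)"
      unfolding \<rho> by (rule rev_image_eqI) simp
  qed
  moreover have "finite (restr P W \<times> sign_vectors J)"
    using assms finite_sign_vectors by blast
  ultimately show ?thesis
    by (rule finite_subset[OF _ finite_imageI])
qed

lemma sign_cell_piece:
  assumes EC: "euclidean_complex X \<iota> P" and J: "finite J" "s \<in> sign_vectors J" and \<sigma>: "\<sigma> \<in> P"
  defines "\<rho> \<equiv> \<sigma> \<inter> \<iota> -` sign_cell J s"
  shows "closedin X \<rho>" "polyhedron (\<iota> ` \<rho>)" "inj_on \<iota> \<rho>"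
    "homeomorphic_map (subtopology X \<rho>) (top_of_set (\<iota> ` \<rho>)) \<iota>"
proof -
  note hom = euclidean_complexD(6)[OF EC \<sigma>]
  have tsp: "topspace (subtopology X \<sigma>) = \<sigma>"
    using euclidean_complexD(1)[OF EC] \<sigma> by auto
  have "closedin (top_of_set (\<iota> ` \<sigma>)) (\<iota> ` \<sigma> \<inter> sign_cell J s)"
    using closed_sign_cell[OF J(2)] by (rule closedin_closed_Int)
  then have "closedin (subtopology X \<sigma>) {x \<in> topspace (subtopology X \<sigma>). \<iota> x \<in> \<iota> ` \<sigma> \<inter> sign_cell J s}"
    using homeomorphic_imp_continuous_map[OF hom] closedin_continuous_map_preimage by blast
  moreover have "{x \<in> topspace (subtopology X \<sigma>). \<iota> x \<in> \<iota> ` \<sigma> \<inter> sign_cell J s} = \<rho>"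
    unfolding tsp \<rho>_def by auto
  ultimately show "closedin X \<rho>"
    using closedin_trans_full euclidean_complexD(3)[OF EC \<sigma>] by metis
  show "polyhedron (\<iota> ` \<rho>)"
    unfolding \<rho>_def image_Int_vimage
    using euclidean_complexD(4)[OF EC \<sigma>] polyhedron_sign_cell[OF J] by (rule polyhedron_Int)
  show "inj_on \<iota> \<rho>"
    using euclidean_complexD(5)[OF EC \<sigma>] unfolding \<rho>_def by (rule inj_on_subset) auto
  have "\<iota> ` (topspace (subtopology X \<sigma>) \<inter> \<rho>) = topspace (top_of_set (\<iota> ` \<sigma>)) \<inter> \<iota> ` \<rho>"
    unfolding tsp \<rho>_def by auto
  from homeomorphic_map_subtopologies[OF hom this]
  have "homeomorphic_map (subtopology X (\<sigma> \<inter> \<rho>)) (top_of_set (\<iota> ` \<sigma> \<inter> \<iota> ` \<rho>)) \<iota>"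
    by (simp add: subtopology_subtopology)
  moreover have "\<sigma> \<inter> \<rho> = \<rho>" "\<iota> ` \<sigma> \<inter> \<iota> ` \<rho> = \<iota> ` \<rho>"
    unfolding \<rho>_def by auto
  ultimately show "homeomorphic_map (subtopology X \<rho>) (top_of_set (\<iota> ` \<rho>)) \<iota>"
    by simp
qed

lemma face_of_sign_cell_piece:
  assumes EC: "euclidean_complex X \<iota> P" and J: "finite J" "s \<in> sign_vectors J" and \<sigma>: "\<sigma> \<in> P"
    and F: "F face_of \<iota> ` (\<sigma> \<inter> \<iota> -` sign_cell J s)"
  shows "(\<sigma> \<inter> \<iota> -` sign_cell J s) \<inter> \<iota> -` F \<in> sign_cells \<iota> P J"
proof -
  obtain G s' where G: "G face_of \<iota> ` \<sigma>" "s' \<in> sign_vectors J" "F = G \<inter> sign_cell J s'"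
    using face_of_Int_sign_cell[OF euclidean_complexD(4)[OF EC \<sigma>] J F[unfolded image_Int_vimage]] .
  have "F \<subseteq> sign_cell J s"
    using face_of_imp_subset[OF F] by auto
  then have "(\<sigma> \<inter> \<iota> -` sign_cell J s) \<inter> \<iota> -` F = (\<sigma> \<inter> \<iota> -` G) \<inter> \<iota> -` sign_cell J s'"
    unfolding G(3) by auto
  then show ?thesis
    using euclidean_complexD(7)[OF EC \<sigma> G(1)] G(2) unfolding sign_cells_def by blast
qed

lemma pface_sign_cell_pieces:
  assumes EC: "euclidean_complex X \<iota> P" and s1: "s1 \<in> sign_vectors J" and s2: "s2 \<in> sign_vectors J"
    and \<sigma>: "\<sigma>1 \<in> P" "\<sigma>2 \<in> P"
  defines "\<rho>1 \<equiv> \<sigma>1 \<inter> \<iota> -` sign_cell J s1" and "\<rho>2 \<equiv> \<sigma>2 \<inter> \<iota> -` sign_cell J s2"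
  shows "pface \<iota> (\<rho>1 \<inter> \<rho>2) \<rho>1"
proof -
  have "\<iota> ` (\<sigma>1 \<inter> \<sigma>2) face_of \<iota> ` \<sigma>1"
    using euclidean_complexD(8)[OF EC \<sigma>] unfolding pface_def by blast
  then have "(\<iota> ` (\<sigma>1 \<inter> \<sigma>2) \<inter> (sign_cell J s1 \<inter> sign_cell J s2)) face_of (\<iota> ` \<sigma>1 \<inter> sign_cell J s1)"
    using face_of_sign_cell_Int[OF s1 s2] by (rule face_of_Int_Int)
  moreover have "\<iota> ` (\<rho>1 \<inter> \<rho>2) = \<iota> ` (\<sigma>1 \<inter> \<sigma>2) \<inter> (sign_cell J s1 \<inter> sign_cell J s2)"
    "\<iota> ` \<rho>1 = \<iota> ` \<sigma>1 \<inter> sign_cell J s1"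
    unfolding \<rho>1_def \<rho>2_def by auto
  ultimately show ?thesis
    unfolding pface_def by auto
qed

lemma euclidean_complex_sign_cells:
  assumes EC: "euclidean_complex X \<iota> P" and J: "finite J"
  shows "euclidean_complex X \<iota> (sign_cells \<iota> P J)"
  unfolding euclidean_complex_def
proof (intro conjI ballI allI impI)
  show "\<Union>(sign_cells \<iota> P J) = topspace X"
  proof
    show "\<Union>(sign_cells \<iota> P J) \<subseteq> topspace X"
      using euclidean_complexD(1)[OF EC] unfolding sign_cells_def by blast
    show "topspace X \<subseteq> \<Union>(sign_cells \<iota> P J)"
    proof
      fix x assume "x \<in> topspace X"
      then obtain \<sigma> where "\<sigma> \<in> P" "x \<in> \<sigma>"
        using euclidean_complexD(1)[OF EC] by blast
      then have "x \<in> \<sigma> \<inter> \<iota> -` sign_cell J (sign_vector_of J (\<iota> x))"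
        "\<sigma> \<inter> \<iota> -` sign_cell J (sign_vector_of J (\<iota> x)) \<in> sign_cells \<iota> P J"
        using sign_vector_of unfolding sign_cells_def by blast+
      then show "x \<in> \<Union>(sign_cells \<iota> P J)"
        by blast
    qed
  qed
next
  fix x assume "x \<in> topspace X"
  then obtain W where W: "openin X W" "x \<in> W" "finite (restr P W)"
    using euclidean_complexD(2)[OF EC] unfolding restr_def by blast
  moreover have "finite {\<rho>\<in>sign_cells \<iota> P J. \<rho> \<inter> W \<noteq> {}}"
    using finite_restr_sign_cells[OF J W(3)] unfolding restr_def .
  ultimately show "\<exists>W. openin X W \<and> x \<in> W \<and> finite {\<rho>\<in>sign_cells \<iota> P J. \<rho> \<inter> W \<noteq> {}}"
    by blast
next
  fix \<rho> assume "\<rho> \<in> sign_cells \<iota> P J"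
  then obtain \<sigma> s where \<sigma>: "\<sigma> \<in> P" "s \<in> sign_vectors J" "\<rho> = \<sigma> \<inter> \<iota> -` sign_cell J s"
    unfolding sign_cells_def by blast
  then show "closedin X \<rho>" "polyhedron (\<iota> ` \<rho>)" "inj_on \<iota> \<rho>"
    "homeomorphic_map (subtopology X \<rho>) (top_of_set (\<iota> ` \<rho>)) \<iota>"
    using sign_cell_piece[OF EC J \<sigma>(2,1)] by simp_all
  show "\<rho> \<inter> \<iota> -` F \<in> sign_cells \<iota> P J" if "F face_of \<iota> ` \<rho>" for F
    using face_of_sign_cell_piece[OF EC J \<sigma>(2,1)] that unfolding \<sigma>(3) .
  fix \<rho>' assume "\<rho>' \<in> sign_cells \<iota> P J"
  then obtain \<sigma>' s' where \<sigma>': "\<sigma>' \<in> P" "s' \<in> sign_vectors J" "\<rho>' = \<sigma>' \<inter> \<iota> -` sign_cell J s'"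
    unfolding sign_cells_def by blast
  show "pface \<iota> (\<rho> \<inter> \<rho>') \<rho>"
    using pface_sign_cell_pieces[OF EC \<sigma>(2) \<sigma>'(2) \<sigma>(1) \<sigma>'(1)] \<sigma>(3) \<sigma>'(3) by simp
  show "pface \<iota> (\<rho> \<inter> \<rho>') \<rho>'"
    using pface_sign_cell_pieces[OF EC \<sigma>'(2) \<sigma>(2) \<sigma>'(1) \<sigma>(1)] \<sigma>(3) \<sigma>'(3) by (simp add: Int_commute)
qed

section \<open>Inward normals of facets\<close>

lemma direction_eq:
  assumes "x0 \<in> affine hull S"
  shows "direction S = (\<lambda>y. y - x0) ` (affine hull S)"
proof
  show "direction S \<subseteq> (\<lambda>y. y - x0) ` (affine hull S)"
  proof
    fix w assume "w \<in> direction S"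
    then obtain x y where xy: "x \<in> affine hull S" "y \<in> affine hull S" "w = y - x"
      unfolding direction_def by blast
    have "x0 + 1 *\<^sub>R (y - x) \<in> affine hull S"
      using mem_affine_3_minus[OF affine_affine_hull assms xy(2) xy(1)] .
    moreover have "w = (x0 + 1 *\<^sub>R (y - x)) - x0"
      using xy by simp
    ultimately show "w \<in> (\<lambda>y. y - x0) ` (affine hull S)"
      by blast
  qed
  show "(\<lambda>y. y - x0) ` (affine hull S) \<subseteq> direction S"
    unfolding direction_def using assms by blast
qed

lemma mem_direction: "x \<in> affine hull S \<Longrightarrow> y \<in> affine hull S \<Longrightarrow> y - x \<in> direction S"
  unfolding direction_def by blast

lemma mem_affine_hull_if_direction:
  assumes "x0 \<in> affine hull S" "y - x0 \<in> direction S"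
  shows "y \<in> affine hull S"
proof -
  obtain z where "z \<in> affine hull S" "y - x0 = z - x0"
    using assms unfolding direction_eq[OF assms(1)] by blast
  then show ?thesis
    by simp
qed

lemma subspace_direction:
  assumes "x0 \<in> S"
  shows "subspace (direction S)"
  unfolding direction_eq[OF hull_inc[OF assms]]
  using affine_diffs_subspace_subtract[OF affine_affine_hull hull_inc[OF assms]] .

lemma aff_dim_eq_dim_direction:
  fixes S :: "'v::euclidean_space set"
  assumes "x0 \<in> S"
  shows "aff_dim S = int (dim (direction S))"
proof -
  have "aff_dim (affine hull S) = int (dim ((\<lambda>x. x - x0) ` (affine hull S)))"
    using aff_dim_eq_dim_subtract[of x0 "affine hull S"] hull_inc[OF assms] by simp
  then show ?thesis
    unfolding direction_eq[OF hull_inc[OF assms]] by simp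
qed

lemma direction_mono: "S \<subseteq> T \<Longrightarrow> direction S \<subseteq> direction T"
  unfolding direction_def using hull_mono by blast

lemma inner_direction_eq_0:
  assumes "S \<subseteq> common_zeros {p}" "w \<in> direction S"
  shows "fst p \<bullet> w = 0"
proof -
  have "affine hull S \<subseteq> common_zeros {p}"
    using assms(1) affine_common_zeros by (rule hull_minimal)
  moreover obtain x y where "x \<in> affine hull S" "y \<in> affine hull S" "w = y - x"
    using assms(2) unfolding direction_def by blast
  ultimately have "x \<in> common_zeros {p}" "y \<in> common_zeros {p}" "w = y - x"
    by blast+
  then show ?thesis
    by (simp add: common_zeros_def aff_form_def inner_diff_right)
qed

definition inward_normal :: "'v::euclidean_space set \<Rightarrow> 'v set \<Rightarrow> 'v \<Rightarrow> bool" where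
  "inward_normal P T v \<longleftrightarrow> norm v = 1 \<and> v \<in> direction P \<and> (\<forall>w\<in>direction T. v \<bullet> w = 0) \<and>
       (\<forall>x\<in>T. \<forall>y\<in>P. (y - x) \<bullet> v \<ge> 0)"

lemma vnormal_eq_The: "vnormal \<iota> \<sigma> \<tau> = (THE v. inward_normal (\<iota> ` \<sigma>) (\<iota> ` \<tau>) v)"
  unfolding vnormal_def inward_normal_def by simp

definition normal_at_facet :: "'v::euclidean_space set \<Rightarrow> 'v \<Rightarrow> 'v set \<Rightarrow> 'v \<Rightarrow> bool" where
  "normal_at_facet T x0 P v \<longleftrightarrow> (\<forall>y\<in>P. (y - x0) \<bullet> v \<ge> 0) \<and>
     (\<forall>y\<in>P. y - x0 - ((y - x0) \<bullet> v) *\<^sub>R v \<in> direction T) \<and> (\<exists>y\<in>P. (y - x0) \<bullet> v > 0)"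

locale convex_facet =
  fixes P T :: "'v::euclidean_space set" and x0 :: 'v
  assumes convex: "convex P" and face: "T face_of P" and x0: "x0 \<in> T"
    and aff_dim: "aff_dim P = aff_dim T + 1"
begin

lemma facet_subset: "T \<subseteq> P"
  using face face_of_imp_subset by blast

lemma subspace_directions: "subspace (direction T)" "subspace (direction P)"
  using x0 facet_subset by (auto intro: subspace_direction)

lemma dim_direction: "dim (direction P) = dim (direction T) + 1"
  using aff_dim aff_dim_eq_dim_direction[OF x0] aff_dim_eq_dim_direction[of x0 P] x0 facet_subset
  by auto

lemma diff_mem_direction: "y \<in> P \<Longrightarrow> y - x0 \<in> direction P"
  using x0 facet_subset by (intro mem_direction hull_inc) auto

lemma unit_normal_exists:
  obtains u where "norm u = 1" "u \<in> direction P" "\<forall>w\<in>direction T. u \<bullet> w = 0"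
proof -
  have "direction T \<noteq> direction P"
    using dim_direction by auto
  then have "span (direction T) \<subset> span (direction P)"
    using direction_mono[OF facet_subset] subspace_directions
    by (simp add: span_eq_iff[THEN iffD2] psubset_eq)
  then obtain u0 where u0: "u0 \<noteq> 0" "u0 \<in> span (direction P)"
    "\<And>y. y \<in> span (direction T) \<Longrightarrow> orthogonal u0 y"
    by (rule orthogonal_to_subspace_exists_gen) auto
  show thesis
  proof
    show "norm (u0 /\<^sub>R norm u0) = 1"
      using u0(1) by simp
    show "u0 /\<^sub>R norm u0 \<in> direction P"
      using u0(2) subspace_directions by (simp add: span_eq_iff[THEN iffD2] subspace_scale)
    have "\<forall>w\<in>direction T. u0 \<bullet> w = 0"
      using u0(3) span_superset unfolding orthogonal_def by blast
    then show "\<forall>w\<in>direction T. (u0 /\<^sub>R norm u0) \<bullet> w = 0"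
      by simp
  qed
qed

lemma direction_facet_eq:
  assumes u: "u \<in> direction P" "norm u = 1" "\<forall>w\<in>direction T. u \<bullet> w = 0"
  shows "direction T = direction P \<inter> {z. u \<bullet> z = 0}"
proof (rule subspace_dim_equal)
  have sub: "subspace (direction P \<inter> {z. u \<bullet> z = 0})"
    using subspace_directions(2) subspace_hyperplane[of u] by (rule subspace_inter)
  then show "subspace (direction P \<inter> {z. u \<bullet> z = 0})" .
  show "subspace (direction T)"
    using subspace_directions(1) .
  show "direction T \<subseteq> direction P \<inter> {z. u \<bullet> z = 0}"
    using direction_mono[OF facet_subset] u(3) by auto
  have "u \<notin> {z. u \<bullet> z = 0}"
    using u(2) by (simp add: dot_square_norm)
  moreover have "span (direction P \<inter> {z. u \<bullet> z = 0}) = direction P \<inter> {z. u \<bullet> z = 0}"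
    "span (direction P) = direction P"
    using sub subspace_directions(2) by (simp_all add: span_eq_iff)
  ultimately have "span (direction P \<inter> {z. u \<bullet> z = 0}) \<subset> span (direction P)"
    using u(1) by blast
  then have "dim (direction P \<inter> {z. u \<bullet> z = 0}) < dim (direction P)"
    by (rule dim_psubset)
  then show "dim (direction P \<inter> {z. u \<bullet> z = 0}) \<le> dim (direction T)"
    using dim_direction by simp
qed

lemma direction_decomposition:
  assumes "u \<in> direction P" "norm u = 1" "\<forall>w\<in>direction T. u \<bullet> w = 0" "z \<in> direction P"
  shows "z - (z \<bullet> u) *\<^sub>R u \<in> direction T"
proof -
  have "z - (z \<bullet> u) *\<^sub>R u \<in> direction P"
    using assms subspace_directions(2) by (simp add: subspace_diff subspace_scale)
  moreover have "u \<bullet> u = 1"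
    using assms(2) by (simp add: dot_square_norm)
  then have "u \<bullet> (z - (z \<bullet> u) *\<^sub>R u) = 0"
    by (simp add: inner_diff_right inner_commute)
  ultimately show ?thesis
    using direction_facet_eq[OF assms(1-3)] by blast
qed

lemma mem_facet_if_orthogonal:
  assumes u: "u \<in> direction P" "norm u = 1" "\<forall>w\<in>direction T. u \<bullet> w = 0"
    and y: "y \<in> P" "(y - x0) \<bullet> u = 0"
  shows "y \<in> T"
proof -
  have "u \<bullet> (y - x0) = 0"
    using y(2) by (simp add: inner_commute)
  then have "y - x0 \<in> direction T"
    unfolding direction_facet_eq[OF u] using diff_mem_direction[OF y(1)] by blast
  then have "y \<in> affine hull T"
    by (rule mem_affine_hull_if_direction[OF hull_inc[OF x0]])
  then show ?thesis
    using y(1) by (subst face_of_imp_eq_affine_Int[OF convex face]) blast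
qed

lemma inner_facet_shift:
  assumes "\<forall>w\<in>direction T. u \<bullet> w = 0" "x \<in> T"
  shows "(y - x) \<bullet> u = (y - x0) \<bullet> u"
proof -
  have "x - x0 \<in> direction T"
    using assms(2) x0 by (intro mem_direction hull_inc)
  then have "u \<bullet> (x - x0) = 0"
    using assms(1) by blast
  then have "x \<bullet> u = x0 \<bullet> u"
    by (simp add: inner_diff_right inner_commute)
  then show ?thesis
    by (simp add: inner_diff_left)
qed

lemma not_all_orthogonal:
  assumes "u \<in> direction P" "norm u = 1" "\<forall>w\<in>direction T. u \<bullet> w = 0"
  shows "\<exists>y\<in>P. (y - x0) \<bullet> u \<noteq> 0"
proof (rule ccontr)
  assume "\<not> ?thesis"
  then have "P \<subseteq> T"
    using mem_facet_if_orthogonal[OF assms] by blast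
  then have "aff_dim P \<le> aff_dim T"
    by (rule aff_dim_subset)
  then show False
    using aff_dim by simp
qed

text \<open>A segment of P crossing the hyperplane through the facet would meet the facet in an
interior point of the segment.\<close>

lemma on_one_side:
  assumes u: "u \<in> direction P" "norm u = 1" "\<forall>w\<in>direction T. u \<bullet> w = 0"
  shows "(\<forall>y\<in>P. (y - x0) \<bullet> u \<ge> 0) \<or> (\<forall>y\<in>P. (y - x0) \<bullet> u \<le> 0)"
proof (rule ccontr)
  define g where "g y = (y - x0) \<bullet> u" for y
  assume "\<not> ?thesis"
  then obtain y1 y2 where y: "y1 \<in> P" "y2 \<in> P" "g y1 < 0" "g y2 > 0"
    by (auto simp: not_le g_def)
  define t where "t = g y1 / (g y1 - g y2)"
  have t: "0 < t" "t < 1"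
    using y unfolding t_def by (auto simp: field_simps)
  define z where "z = (1 - t) *\<^sub>R y1 + t *\<^sub>R y2"
  have "g z = (1 - t) * g y1 + t * g y2"
    unfolding z_def g_def by (simp add: inner_diff_left inner_add_left algebra_simps)
  then have "g z = 0"
    unfolding t_def using y by (simp add: field_simps)
  moreover have "z \<in> P"
    using convex y t unfolding z_def convex_alt by auto
  ultimately have "z \<in> T"
    using mem_facet_if_orthogonal[OF u] by (simp add: g_def)
  moreover have "z \<in> open_segment y1 y2"
    using y t unfolding z_def in_segment by auto
  ultimately have "y1 \<in> T"
    using face y unfolding face_of_def by blast
  then have "y1 - x0 \<in> direction T"
    using x0 by (intro mem_direction hull_inc)
  then have "u \<bullet> (y1 - x0) = 0"
    using u(3) by blast
  then show False
    using y(3) by (simp add: g_def inner_commute)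
qed

lemma inward_normal_exists: "\<exists>v. inward_normal P T v"
proof -
  obtain u where u: "norm u = 1" "u \<in> direction P" "\<forall>w\<in>direction T. u \<bullet> w = 0"
    using unit_normal_exists by blast
  define e :: real where "e = (if \<forall>y\<in>P. (y - x0) \<bullet> u \<ge> 0 then 1 else -1)"
  have e: "\<bar>e\<bar> = 1"
    by (simp add: e_def)
  have sign: "\<forall>y\<in>P. e * ((y - x0) \<bullet> u) \<ge> 0"
    using on_one_side[OF u(2,1,3)] by (auto simp: e_def mult_le_0_iff)
  have "inward_normal P T (e *\<^sub>R u)"
    unfolding inward_normal_def
  proof (intro conjI ballI)
    show "norm (e *\<^sub>R u) = 1"
      using e u(1) by simp
    show "e *\<^sub>R u \<in> direction P"
      using u(2) subspace_directions(2) by (simp add: subspace_scale)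
    show "(e *\<^sub>R u) \<bullet> w = 0" if "w \<in> direction T" for w
      using u(3) that by simp
    show "(y - x) \<bullet> (e *\<^sub>R u) \<ge> 0" if "x \<in> T" "y \<in> P" for x y
      using sign that(2) inner_facet_shift[OF u(3) that(1), of y] by (simp add: mult.commute)
  qed
  then show ?thesis ..
qed

lemma inward_normal_decomposition:
  assumes "inward_normal P T v" "z \<in> direction P"
  shows "z - (z \<bullet> v) *\<^sub>R v \<in> direction T"
  using assms direction_decomposition by (auto simp: inward_normal_def)

lemma inward_normal_strict:
  assumes v: "inward_normal P T v"
  shows "\<exists>y\<in>P. \<forall>x\<in>T. (y - x) \<bullet> v > 0"
proof -
  have u: "v \<in> direction P" "norm v = 1" "\<forall>w\<in>direction T. v \<bullet> w = 0"
    and ge: "\<forall>y\<in>P. (y - x0) \<bullet> v \<ge> 0"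
    using v x0 by (auto simp: inward_normal_def)
  obtain y where y: "y \<in> P" "(y - x0) \<bullet> v \<noteq> 0"
    using not_all_orthogonal[OF u] by blast
  then have pos: "(y - x0) \<bullet> v > 0"
    using ge by (simp add: order.not_eq_order_implies_strict)
  have "(y - x) \<bullet> v > 0" if "x \<in> T" for x
    using pos inner_facet_shift[OF u(3) that, of y] by simp
  then show ?thesis
    using y(1) by blast
qed

lemma inward_normal_unique:
  assumes v: "inward_normal P T v" and v': "inward_normal P T v'"
  shows "v' = v"
proof -
  have vP: "v \<in> direction P" "norm v = 1" "\<forall>w\<in>direction T. v \<bullet> w = 0"
    and v'P: "v' \<in> direction P" "norm v' = 1" "\<forall>w\<in>direction T. v' \<bullet> w = 0"
    using v v' by (auto simp: inward_normal_def)
  define c where "c = v' \<bullet> v"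
  have r: "v' - c *\<^sub>R v \<in> direction T"
    unfolding c_def using direction_decomposition[OF vP v'P(1)] .
  have "(v' - c *\<^sub>R v) \<bullet> (v' - c *\<^sub>R v) = 0"
    using v'P(3) vP(3) r by (simp add: inner_diff_left)
  then have v'_eq: "v' = c *\<^sub>R v"
    by simp
  obtain y where y: "y \<in> P" "(y - x0) \<bullet> v > 0"
    using inward_normal_strict[OF v] x0 by blast
  have "(y - x0) \<bullet> v' \<ge> 0"
    using v' y(1) x0 by (auto simp: inward_normal_def)
  then have "c \<ge> 0"
    using y(2) unfolding v'_eq by (simp add: zero_le_mult_iff)
  moreover have "\<bar>c\<bar> = 1"
    using v'P(2) vP(2) unfolding v'_eq by simp
  ultimately show ?thesis
    using v'_eq by simp
qed

lemma The_inward_normal: "inward_normal P T (THE v. inward_normal P T v)"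
  by (rule theI') (use inward_normal_exists inward_normal_unique in blast)

lemma normal_at_facet_inward_normal:
  assumes "inward_normal P T v"
  shows "normal_at_facet T x0 P v"
proof -
  have "(y - x0) \<bullet> v \<ge> 0" if "y \<in> P" for y
    using assms that x0 by (auto simp: inward_normal_def)
  moreover have "y - x0 - ((y - x0) \<bullet> v) *\<^sub>R v \<in> direction T" if "y \<in> P" for y
    using inward_normal_decomposition[OF assms diff_mem_direction[OF that]] .
  moreover have "\<exists>y\<in>P. (y - x0) \<bullet> v > 0"
    using inward_normal_strict[OF assms] x0 by blast
  ultimately show ?thesis
    by (simp add: normal_at_facet_def)
qed

end


section \<open>Strict concavity of the crease function\<close>

lemma aff_form_near_facet:
  assumes "\<forall>z\<in>T. aff_form j z = 0" "x0 \<in> T" "y - x0 - ((y - x0) \<bullet> v) *\<^sub>R v \<in> direction T"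
  shows "aff_form j y = ((y - x0) \<bullet> v) * (fst j \<bullet> v)"
proof -
  have "fst j \<bullet> (y - x0 - ((y - x0) \<bullet> v) *\<^sub>R v) = 0"
    using assms(1,3) by (intro inner_direction_eq_0) (auto simp: common_zeros_def)
  moreover have "aff_form j x0 = 0"
    using assms(1,2) by blast
  ultimately show ?thesis
    by (simp add: aff_form_def inner_diff_right algebra_simps)
qed

text \<open>The slope along v of the summand \<open>min (aff_form j) 0\<close> of the crease function on a set P
on which the form has constant sign.\<close>

definition crease_slope :: "('v::euclidean_space \<times> real) set \<Rightarrow> 'v set \<Rightarrow> 'v \<Rightarrow> 'v \<times> real \<Rightarrow> real" where
  "crease_slope J P v j = (if j \<in> neg_forms J P then fst j \<bullet> v else 0)"

lemma sum_neg_forms_eq_sum_crease_slope: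
  "finite J \<Longrightarrow> (\<Sum>j\<in>neg_forms J P. fst j \<bullet> v) = (\<Sum>j\<in>J. crease_slope J P v j)"
  by (simp add: crease_slope_def sum.If_cases neg_forms_def Int_def)

lemma crease_slope_at_facet:
  assumes j: "j \<in> J" "\<forall>z\<in>T. aff_form j z = 0" and x0: "x0 \<in> T" and P: "normal_at_facet T x0 P v"
  shows "crease_slope J P v j = - max (- (fst j \<bullet> v)) 0"
proof -
  have "j \<in> neg_forms J P \<longleftrightarrow> fst j \<bullet> v < 0"
  proof
    assume "j \<in> neg_forms J P"
    then obtain y where y: "y \<in> P" "aff_form j y < 0"
      by (auto simp: neg_forms_def)
    have "aff_form j y = ((y - x0) \<bullet> v) * (fst j \<bullet> v)" "(y - x0) \<bullet> v \<ge> 0"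
      using P y(1) aff_form_near_facet[OF j(2) x0] by (auto simp: normal_at_facet_def)
    then show "fst j \<bullet> v < 0"
      using y(2) by (auto simp: mult_less_0_iff)
  next
    assume neg: "fst j \<bullet> v < 0"
    obtain y where y: "y \<in> P" "(y - x0) \<bullet> v > 0"
      using P by (auto simp: normal_at_facet_def)
    have "aff_form j y = ((y - x0) \<bullet> v) * (fst j \<bullet> v)"
      using P y(1) aff_form_near_facet[OF j(2) x0] by (auto simp: normal_at_facet_def)
    then have "aff_form j y < 0"
      using y(2) neg by (simp add: mult_pos_neg)
    then show "j \<in> neg_forms J P"
      using y(1) j(1) by (auto simp: neg_forms_def)
  qed
  then show ?thesis
    by (simp add: crease_slope_def)
qed

lemma balanced_neg_part_pos:
  fixes c p :: "'s \<Rightarrow> real"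
  assumes S: "finite S" and c: "\<forall>\<sigma>\<in>S. c \<sigma> \<ge> 0" and bal: "(\<Sum>\<sigma>\<in>S. c \<sigma> * p \<sigma>) = 0"
    and s: "s \<in> S" "c s > 0" "p s \<noteq> 0"
  shows "0 < (\<Sum>\<sigma>\<in>S. c \<sigma> * max (- p \<sigma>) 0)"
proof -
  have "(\<Sum>\<sigma>\<in>S. c \<sigma> * max (- p \<sigma>) 0) = (\<Sum>\<sigma>\<in>S. c \<sigma> * max (- p \<sigma>) 0) + (\<Sum>\<sigma>\<in>S. c \<sigma> * p \<sigma>)"
    using bal by simp
  also have "\<dots> = (\<Sum>\<sigma>\<in>S. c \<sigma> * max (p \<sigma>) 0)"
    by (subst sum.distrib[symmetric]) (auto intro!: sum.cong simp: max_def algebra_simps)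
  finally have pos_part: "(\<Sum>\<sigma>\<in>S. c \<sigma> * max (- p \<sigma>) 0) = (\<Sum>\<sigma>\<in>S. c \<sigma> * max (p \<sigma>) 0)" .
  show ?thesis
  proof (cases "p s < 0")
    case True
    then show ?thesis
      using S c s by (intro sum_pos2[of S s]) (auto simp: mult_pos_neg)
  next
    case False
    then show ?thesis
      unfolding pos_part using S c s by (intro sum_pos2[of S s]) auto
  qed
qed

text \<open>A point of the facet where the form is nonzero decides its sign on all cells around the
facet.\<close>

lemma crease_slopes_off_facet:
  assumes j: "j \<in> J" and z: "z \<in> T" "aff_form j z \<noteq> 0"
    and TP: "\<forall>\<sigma>\<in>S. T \<subseteq> P \<sigma>" and sg: "\<forall>\<sigma>\<in>S. sign_constant_on J (P \<sigma>)"
  shows "(\<forall>\<sigma>\<in>S. crease_slope J (P \<sigma>) (v \<sigma>) j = fst j \<bullet> v \<sigma>) \<or>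
    (\<forall>\<sigma>\<in>S. crease_slope J (P \<sigma>) (v \<sigma>) j = 0)"
proof (cases "aff_form j z < 0")
  case True
  then have "j \<in> neg_forms J (P \<sigma>)" if "\<sigma> \<in> S" for \<sigma>
    using TP z j that by (auto simp: neg_forms_def)
  then show ?thesis
    by (simp add: crease_slope_def)
next
  case False
  then have "aff_form j z > 0"
    using z by simp
  then have "j \<notin> neg_forms J (P \<sigma>)" if "\<sigma> \<in> S" for \<sigma>
    using TP z j sg that by (force simp: neg_forms_def sign_constant_on_def)
  then show ?thesis
    by (simp add: crease_slope_def)
qed

text \<open>Weighted slopes of one summand of the crease function along the inward normals around a
facet: the balancing condition cancels them for a form not vanishing on the facet, and a form
vanishing on it contributes the negative parts of its slopes.\<close>

lemma balanced_crease_slopes: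
  fixes P :: "'s \<Rightarrow> 'v::euclidean_space set" and v :: "'s \<Rightarrow> 'v"
  assumes S: "finite S" and c: "\<forall>\<sigma>\<in>S. c \<sigma> \<ge> 0" and bal: "(\<Sum>\<sigma>\<in>S. c \<sigma> *\<^sub>R v \<sigma>) = 0"
    and x0: "x0 \<in> T" and TP: "\<forall>\<sigma>\<in>S. T \<subseteq> P \<sigma>" and normal: "\<forall>\<sigma>\<in>S. normal_at_facet T x0 (P \<sigma>) (v \<sigma>)"
    and sg: "\<forall>\<sigma>\<in>S. sign_constant_on J (P \<sigma>)" and j: "j \<in> J"
  shows "(\<Sum>\<sigma>\<in>S. c \<sigma> * crease_slope J (P \<sigma>) (v \<sigma>) j) \<le> 0"
    and "\<forall>z\<in>T. aff_form j z = 0 \<Longrightarrow> s \<in> S \<Longrightarrow> c s > 0 \<Longrightarrow> \<exists>y\<in>P s. aff_form j y \<noteq> 0 \<Longrightarrow>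
           (\<Sum>\<sigma>\<in>S. c \<sigma> * crease_slope J (P \<sigma>) (v \<sigma>) j) < 0"
proof -
  have bal_j: "(\<Sum>\<sigma>\<in>S. c \<sigma> * (fst j \<bullet> v \<sigma>)) = 0"
    using arg_cong[OF bal, of "inner (fst j)"] by (simp add: inner_sum_right)
  have vanishing: "(\<Sum>\<sigma>\<in>S. c \<sigma> * crease_slope J (P \<sigma>) (v \<sigma>) j) =
      - (\<Sum>\<sigma>\<in>S. c \<sigma> * max (- (fst j \<bullet> v \<sigma>)) 0)" if "\<forall>z\<in>T. aff_form j z = 0"
    using crease_slope_at_facet[OF j that x0] normal by (simp add: sum_negf[symmetric])
  show "(\<Sum>\<sigma>\<in>S. c \<sigma> * crease_slope J (P \<sigma>) (v \<sigma>) j) \<le> 0"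
  proof (cases "\<forall>z\<in>T. aff_form j z = 0")
    case True
    then show ?thesis
      unfolding vanishing[OF True] using c by (simp add: sum_nonneg)
  next
    case False
    then obtain z where "z \<in> T" "aff_form j z \<noteq> 0"
      by blast
    from crease_slopes_off_facet[OF j this TP sg]
    show ?thesis
    proof
      assume "\<forall>\<sigma>\<in>S. crease_slope J (P \<sigma>) (v \<sigma>) j = fst j \<bullet> v \<sigma>"
      then show ?thesis
        using bal_j by (simp cong: sum.cong)
    qed (simp cong: sum.cong)
  qed
  assume vanish: "\<forall>z\<in>T. aff_form j z = 0" and s: "s \<in> S" "c s > 0" "\<exists>y\<in>P s. aff_form j y \<noteq> 0"
  have "fst j \<bullet> v s \<noteq> 0"
    using s(3) normal s(1) aff_form_near_facet[OF vanish x0] by (force simp: normal_at_facet_def)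
  then show "(\<Sum>\<sigma>\<in>S. c \<sigma> * crease_slope J (P \<sigma>) (v \<sigma>) j) < 0"
    unfolding vanishing[OF vanish] using balanced_neg_part_pos[OF S c bal_j s(1,2)] by simp
qed

text \<open>The part of the polyhedron inside V is relatively open, so it spans the same affine hull
as the polyhedron.\<close>

lemma lin_part_eq_inner:
  fixes \<iota> :: "'a \<Rightarrow> 'v::euclidean_space"
  assumes EC: "euclidean_complex X \<iota> S" and \<sigma>: "\<sigma> \<in> S" and V: "openin X V" "\<sigma> \<inter> V \<noteq> {}"
    and f: "\<forall>x\<in>\<sigma>. f x = w \<bullet> \<iota> x" and v: "v \<in> direction (\<iota> ` \<sigma>)"
  shows "lin_part \<iota> V f \<sigma> v = w \<bullet> v"
proof -
  define g where "g = lin_part \<iota> V f \<sigma>"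
  have "linear (\<lambda>y. w \<bullet> y) \<and> (\<forall>x\<in>\<sigma> \<inter> V. f x = w \<bullet> \<iota> x)"
    using f bounded_linear.linear[OF bounded_linear_inner_right] by blast
  then have g: "linear g \<and> (\<forall>x\<in>\<sigma> \<inter> V. f x = g (\<iota> x))"
    unfolding g_def lin_part_def
    by (rule someI[where P = "\<lambda>g. linear g \<and> (\<forall>x\<in>\<sigma> \<inter> V. f x = g (\<iota> x))"])
  define h where "h y = g y - w \<bullet> y" for y
  have lin_h: "linear h"
    unfolding h_def using g bounded_linear.linear[OF bounded_linear_inner_right]
    by (intro linear_compose_sub) auto
  define W where "W = \<iota> ` (\<sigma> \<inter> V)"
  have h0: "h y = 0" if "y \<in> W" for y
    using that g f unfolding W_def h_def by auto
  have hom: "homeomorphic_map (subtopology X \<sigma>) (top_of_set (\<iota> ` \<sigma>)) \<iota>"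
    using euclidean_complexD(6)[OF EC \<sigma>] .
  have "openin (subtopology X \<sigma>) (\<sigma> \<inter> V)"
    using V(1) by (rule openin_subtopology_Int2)
  moreover have "\<sigma> \<inter> V \<subseteq> topspace (subtopology X \<sigma>)"
    using euclidean_complexD(1)[OF EC] \<sigma> by auto
  ultimately have "openin (top_of_set (\<iota> ` \<sigma>)) W"
    unfolding W_def using homeomorphic_map_openness[OF hom] by blast
  then obtain O' where O': "open O'" "W = \<iota> ` \<sigma> \<inter> O'"
    unfolding openin_open by blast
  have cvx: "convex (\<iota> ` \<sigma>)"
    using euclidean_complexD(4)[OF EC \<sigma>] polyhedron_imp_convex by blast
  have "W \<noteq> {}"
    using V(2) unfolding W_def by blast
  then have aff: "affine hull W = affine hull (\<iota> ` \<sigma>)"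
    unfolding O'(2) using affine_hull_convex_Int_open[OF cvx O'(1)] by simp
  obtain x y where xy: "x \<in> affine hull (\<iota> ` \<sigma>)" "y \<in> affine hull (\<iota> ` \<sigma>)" "v = y - x"
    using v unfolding direction_def by blast
  have "x \<in> span W" "y \<in> span W"
    using xy aff affine_hull_subset_span by blast+
  then have "h x = 0" "h y = 0"
    using linear_eq_0_on_span[OF lin_h h0] by blast+
  then have "h v = 0"
    unfolding xy(3) using linear_diff[OF lin_h] by simp
  then show ?thesis
    unfolding h_def g_def by simp
qed

context
  fixes X :: "'a topology" and \<iota> :: "'a \<Rightarrow> 'v::euclidean_space" and P :: "'a set set"
    and J :: "('v \<times> real) set" and \<alpha> :: 'v and \<beta> :: real
  assumes EC: "euclidean_complex X \<iota> P" and J: "finite J"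
    and hyperplane: "\<forall>x\<in>topspace X. \<alpha> \<bullet> \<iota> x = \<beta>" and \<beta>: "\<beta> \<noteq> 0"
begin

lemma sign_cells_cases:
  assumes "\<rho> \<in> sign_cells \<iota> P J"
  obtains \<sigma> s where "\<sigma> \<in> P" "s \<in> sign_vectors J" "\<rho> = \<sigma> \<inter> \<iota> -` sign_cell J s"
  using assms unfolding sign_cells_def by blast

text \<open>On the hyperplane \<open>\<alpha> \<bullet> y = \<beta>\<close>, which misses the origin, every affine function is
linear: a constant b equals \<open>(b / \<beta>) \<alpha> \<bullet> y\<close> there, and \<open>\<alpha>\<close> is orthogonal to the directions
of the cells.\<close>

lemma sign_cells_sign_constant:
  assumes "\<rho> \<in> sign_cells \<iota> P J"
  shows "sign_constant_on J (\<iota> ` \<rho>)"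
proof -
  obtain \<sigma> s where "s \<in> sign_vectors J" "\<rho> = \<sigma> \<inter> \<iota> -` sign_cell J s"
    using sign_cells_cases[OF assms] .
  then show ?thesis
    by (intro sign_constant_on_sign_cell) auto
qed

lemma crease_fun_linear_on_sign_cell:
  assumes \<rho>: "\<rho> \<in> sign_cells \<iota> P J"
  obtains w where "\<forall>x\<in>\<rho>. crease_fun J (\<iota> x) = w \<bullet> \<iota> x"
    and "\<And>v. v \<in> direction (\<iota> ` \<rho>) \<Longrightarrow> w \<bullet> v = (\<Sum>j\<in>neg_forms J (\<iota> ` \<rho>). fst j \<bullet> v)"
proof
  define N where "N = neg_forms J (\<iota> ` \<rho>)"
  obtain \<sigma> s where \<sigma>: "\<sigma> \<in> P" "s \<in> sign_vectors J" "\<rho> = \<sigma> \<inter> \<iota> -` sign_cell J s"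
    using sign_cells_cases[OF \<rho>] .
  have sg: "sign_constant_on J (\<iota> ` \<rho>)"
    using \<rho> by (rule sign_cells_sign_constant)
  have "\<rho> \<subseteq> topspace X"
    using \<sigma>(1,3) euclidean_complexD(1)[OF EC] by auto
  then have in_H: "\<alpha> \<bullet> \<iota> x = \<beta>" if "x \<in> \<rho>" for x
    using hyperplane that by blast
  show "\<forall>x\<in>\<rho>. crease_fun J (\<iota> x) = (\<Sum>j\<in>N. fst j - (snd j / \<beta>) *\<^sub>R \<alpha>) \<bullet> \<iota> x"
  proof
    fix x assume x: "x \<in> \<rho>"
    have "crease_fun J (\<iota> x) = (\<Sum>j\<in>N. aff_form j (\<iota> x))"
      unfolding N_def using x by (intro crease_fun_eq_sum_neg_forms[OF J sg]) blast
    also have "\<dots> = (\<Sum>j\<in>N. fst j - (snd j / \<beta>) *\<^sub>R \<alpha>) \<bullet> \<iota> x"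
      using in_H[OF x] \<beta> by (simp add: aff_form_def inner_diff_left inner_sum_left)
    finally show "crease_fun J (\<iota> x) = (\<Sum>j\<in>N. fst j - (snd j / \<beta>) *\<^sub>R \<alpha>) \<bullet> \<iota> x" .
  qed
  fix v assume v: "v \<in> direction (\<iota> ` \<rho>)"
  have "\<iota> ` \<rho> \<subseteq> common_zeros {(\<alpha>, \<beta>)}"
    using in_H by (auto simp: common_zeros_def aff_form_def)
  then have "\<alpha> \<bullet> v = 0"
    using inner_direction_eq_0[OF _ v] by fastforce
  then show "(\<Sum>j\<in>N. fst j - (snd j / \<beta>) *\<^sub>R \<alpha>) \<bullet> v = (\<Sum>j\<in>N. fst j \<bullet> v)"
    by (simp add: inner_sum_left inner_diff_left)
qed

lemma pw_affine_on_crease_fun: "pw_affine_on \<iota> (sign_cells \<iota> P J) V (\<lambda>x. crease_fun J (\<iota> x))"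
  unfolding pw_affine_on_def
proof
  fix \<rho> assume "\<rho> \<in> restr (sign_cells \<iota> P J) V"
  then have "\<rho> \<in> sign_cells \<iota> P J"
    unfolding restr_def by blast
  then obtain w where "\<forall>x\<in>\<rho>. crease_fun J (\<iota> x) = w \<bullet> \<iota> x"
    by (rule crease_fun_linear_on_sign_cell)
  then show "\<exists>g. linear g \<and> (\<forall>x\<in>\<rho> \<inter> V. crease_fun J (\<iota> x) = g (\<iota> x))"
    using bounded_linear.linear[OF bounded_linear_inner_right] by blast
qed

lemma wdot_crease_fun:
  assumes V: "openin X V"
    and dir: "\<And>\<sigma>. \<sigma> \<in> restr_dim \<iota> (sign_cells \<iota> P J) V k \<Longrightarrow> pface \<iota> \<tau> \<sigma> \<Longrightarrow>
                 vnormal \<iota> \<sigma> \<tau> \<in> direction (\<iota> ` \<sigma>)"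
  shows "wdot \<iota> (sign_cells \<iota> P J) V (\<lambda>x. crease_fun J (\<iota> x)) k c \<tau> =
    (\<Sum>j\<in>J. - (\<Sum>\<sigma>\<in>{\<sigma>\<in>restr_dim \<iota> (sign_cells \<iota> P J) V k. pface \<iota> \<tau> \<sigma>}.
                   c \<sigma> * crease_slope J (\<iota> ` \<sigma>) (vnormal \<iota> \<sigma> \<tau>) j))"
proof -
  let ?S = "{\<sigma>\<in>restr_dim \<iota> (sign_cells \<iota> P J) V k. pface \<iota> \<tau> \<sigma>}"
  have "lin_part \<iota> V (\<lambda>x. crease_fun J (\<iota> x)) \<sigma> (vnormal \<iota> \<sigma> \<tau>) =
      (\<Sum>j\<in>J. crease_slope J (\<iota> ` \<sigma>) (vnormal \<iota> \<sigma> \<tau>) j)" if \<sigma>: "\<sigma> \<in> ?S" for \<sigma>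
  proof -
    have cell: "\<sigma> \<in> sign_cells \<iota> P J" "\<sigma> \<inter> V \<noteq> {}"
      using \<sigma> by (auto simp: restr_dim_def restr_def)
    obtain w where w: "\<forall>x\<in>\<sigma>. crease_fun J (\<iota> x) = w \<bullet> \<iota> x"
      and slope: "\<And>v. v \<in> direction (\<iota> ` \<sigma>) \<Longrightarrow> w \<bullet> v = (\<Sum>j\<in>neg_forms J (\<iota> ` \<sigma>). fst j \<bullet> v)"
      using crease_fun_linear_on_sign_cell[OF cell(1)] by blast
    have v: "vnormal \<iota> \<sigma> \<tau> \<in> direction (\<iota> ` \<sigma>)"
      using dir \<sigma> by blast
    show ?thesis
      using lin_part_eq_inner[OF euclidean_complex_sign_cells[OF EC J] cell(1) V cell(2) w v]
      by (simp add: slope[OF v] sum_neg_forms_eq_sum_crease_slope[OF J])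
  qed
  then have "wdot \<iota> (sign_cells \<iota> P J) V (\<lambda>x. crease_fun J (\<iota> x)) k c \<tau> =
      - (\<Sum>\<sigma>\<in>?S. \<Sum>j\<in>J. c \<sigma> * crease_slope J (\<iota> ` \<sigma>) (vnormal \<iota> \<sigma> \<tau>) j)"
    unfolding wdot_def by (simp add: sum_distrib_left)
  also have "\<dots> = (\<Sum>j\<in>J. - (\<Sum>\<sigma>\<in>?S. c \<sigma> * crease_slope J (\<iota> ` \<sigma>) (vnormal \<iota> \<sigma> \<tau>) j))"
    by (subst sum.swap) (simp add: sum_negf)
  finally show ?thesis .
qed

lemma separating_form:
  assumes hrep: "\<forall>\<sigma>\<in>restr P U. \<exists>C\<subseteq>J. \<iota> ` \<sigma> = affine hull (\<iota> ` \<sigma>) \<inter> hpoly C"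
    and \<rho>: "\<rho> \<in> sign_cells \<iota> P J" "\<rho> \<inter> U \<noteq> {}"
    and \<tau>: "\<iota> ` \<tau> face_of \<iota> ` \<rho>" "\<iota> ` \<tau> \<noteq> {}" "aff_dim (\<iota> ` \<rho>) = aff_dim (\<iota> ` \<tau>) + 1"
  obtains j where "j \<in> J" "\<forall>z\<in>\<iota> ` \<tau>. aff_form j z = 0" "\<exists>y\<in>\<iota> ` \<rho>. aff_form j y \<noteq> 0"
proof -
  obtain \<sigma> s where \<sigma>: "\<sigma> \<in> P" "s \<in> sign_vectors J" and \<rho>_eq: "\<rho> = \<sigma> \<inter> \<iota> -` sign_cell J s"
    using sign_cells_cases[OF \<rho>(1)] .
  have "\<sigma> \<in> restr P U"
    using \<rho>(2) \<sigma>(1) unfolding \<rho>_eq restr_def by blast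
  then obtain C where C: "C \<subseteq> J" "\<iota> ` \<sigma> = affine hull (\<iota> ` \<sigma>) \<inter> hpoly C"
    using hrep by blast
  have img: "\<iota> ` \<rho> = \<iota> ` \<sigma> \<inter> sign_cell J s"
    unfolding \<rho>_eq by (rule image_Int_vimage)
  have "\<iota> ` \<tau> \<noteq> \<iota> ` \<rho>"
    using \<tau>(3) by auto
  then show thesis
    using active_form_separates[OF C(2,1) J \<sigma>(2)] \<tau>(1,2) that unfolding img by blast
qed

lemma vnormal_at_facet:
  assumes \<sigma>: "\<sigma> \<in> sign_cells \<iota> P J" and \<tau>: "\<iota> ` \<tau> face_of \<iota> ` \<sigma>" "z \<in> \<tau>"
    "aff_dim (\<iota> ` \<sigma>) = aff_dim (\<iota> ` \<tau>) + 1"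
  shows "vnormal \<iota> \<sigma> \<tau> \<in> direction (\<iota> ` \<sigma>)"
    and "normal_at_facet (\<iota> ` \<tau>) (\<iota> z) (\<iota> ` \<sigma>) (vnormal \<iota> \<sigma> \<tau>)"
proof -
  have "convex (\<iota> ` \<sigma>)"
    using euclidean_complexD(4)[OF euclidean_complex_sign_cells[OF EC J] \<sigma>] polyhedron_imp_convex
    by blast
  then interpret convex_facet "\<iota> ` \<sigma>" "\<iota> ` \<tau>" "\<iota> z"
    using \<tau> by unfold_locales auto
  have "inward_normal (\<iota> ` \<sigma>) (\<iota> ` \<tau>) (vnormal \<iota> \<sigma> \<tau>)"
    unfolding vnormal_eq_The by (rule The_inward_normal)
  then show "vnormal \<iota> \<sigma> \<tau> \<in> direction (\<iota> ` \<sigma>)"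
    and "normal_at_facet (\<iota> ` \<tau>) (\<iota> z) (\<iota> ` \<sigma>) (vnormal \<iota> \<sigma> \<tau>)"
    by (auto simp: inward_normal_def intro: normal_at_facet_inward_normal)
qed

lemma strictly_concave_crease_fun:
  assumes hrep: "\<forall>\<sigma>\<in>restr P U. \<exists>C\<subseteq>J. \<iota> ` \<sigma> = affine hull (\<iota> ` \<sigma>) \<inter> hpoly C"
    and fin: "finite (restr (sign_cells \<iota> P J) U)"
  shows "strictly_concave_on_complex X \<iota> (sign_cells \<iota> P J) U (\<lambda>x. crease_fun J (\<iota> x))"
  unfolding strictly_concave_on_complex_def
proof (intro conjI allI ballI impI)
  show "pw_affine_on \<iota> (sign_cells \<iota> P J) U (\<lambda>x. crease_fun J (\<iota> x))"
    by (rule pw_affine_on_crease_fun)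
  fix k \<tau> V c
  assume \<tau>: "\<tau> \<in> restr_dim \<iota> (sign_cells \<iota> P J) U k"
    and V: "openin X V \<and> V \<subseteq> U \<and> V \<inter> \<tau> \<noteq> {}"
    and c: "pos_minkowski_weight \<iota> (sign_cells \<iota> P J) V (k + 1) c \<and>
      (\<exists>\<sigma>\<in>restr_dim \<iota> (sign_cells \<iota> P J) V (k + 1). pface \<iota> \<tau> \<sigma> \<and> 0 < c \<sigma>)"
  define S where "S = {\<sigma>\<in>restr_dim \<iota> (sign_cells \<iota> P J) V (k + 1). pface \<iota> \<tau> \<sigma>}"
  obtain z where z: "z \<in> \<tau>" "z \<in> V"
    using V by blast
  have \<tau>_dim: "aff_dim (\<iota> ` \<tau>) = k"
    using \<tau> by (simp add: restr_dim_def pdim_def)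
  have \<tau>V: "\<tau> \<in> restr_dim \<iota> (sign_cells \<iota> P J) V k"
    using \<tau> z by (auto simp: restr_dim_def restr_def)
  have S_facts: "\<sigma> \<in> sign_cells \<iota> P J" "\<sigma> \<inter> U \<noteq> {}" "\<iota> ` \<tau> \<subseteq> \<iota> ` \<sigma>" "\<iota> ` \<tau> face_of \<iota> ` \<sigma>"
    "aff_dim (\<iota> ` \<sigma>) = aff_dim (\<iota> ` \<tau>) + 1" if "\<sigma> \<in> S" for \<sigma>
    using that V \<tau>_dim by (auto simp: S_def restr_dim_def restr_def pface_def pdim_def)
  note normal = vnormal_at_facet[OF S_facts(1,4) z(1) S_facts(5)]
  have "S \<subseteq> restr (sign_cells \<iota> P J) U"
    using V by (auto simp: S_def restr_dim_def restr_def)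
  then have finS: "finite S"
    using fin by (rule finite_subset)
  have c_nonneg: "\<forall>\<sigma>\<in>S. c \<sigma> \<ge> 0" and bal: "(\<Sum>\<sigma>\<in>S. c \<sigma> *\<^sub>R vnormal \<iota> \<sigma> \<tau>) = 0"
    using c \<tau>V unfolding pos_minkowski_weight_def S_def by auto
  obtain \<sigma>s where \<sigma>s: "\<sigma>s \<in> S" "c \<sigma>s > 0"
    using c unfolding S_def by blast
  obtain js where js: "js \<in> J" "\<forall>z\<in>\<iota> ` \<tau>. aff_form js z = 0" "\<exists>y\<in>\<iota> ` \<sigma>s. aff_form js y \<noteq> 0"
    using separating_form[OF hrep S_facts(1,2,4)[OF \<sigma>s(1)]] S_facts(5)[OF \<sigma>s(1)] z(1) by blast
  have slope_facts: "\<forall>\<sigma>\<in>S. \<iota> ` \<tau> \<subseteq> \<iota> ` \<sigma>"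
    "\<forall>\<sigma>\<in>S. normal_at_facet (\<iota> ` \<tau>) (\<iota> z) (\<iota> ` \<sigma>) (vnormal \<iota> \<sigma> \<tau>)"
    "\<forall>\<sigma>\<in>S. sign_constant_on J (\<iota> ` \<sigma>)"
    using S_facts(3) normal(2) sign_cells_sign_constant S_facts(1) by blast+
  note slopes = balanced_crease_slopes[where P = "\<lambda>\<sigma>. \<iota> ` \<sigma>" and v = "\<lambda>\<sigma>. vnormal \<iota> \<sigma> \<tau>",
      OF finS c_nonneg bal imageI[OF z(1)] slope_facts]
  have "wdot \<iota> (sign_cells \<iota> P J) V (\<lambda>x. crease_fun J (\<iota> x)) (k + 1) c \<tau> =
      (\<Sum>j\<in>J. - (\<Sum>\<sigma>\<in>S. c \<sigma> * crease_slope J (\<iota> ` \<sigma>) (vnormal \<iota> \<sigma> \<tau>) j))"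
    unfolding S_def using V normal(1) by (intro wdot_crease_fun) (auto simp: S_def)
  also have "\<dots> > 0"
    using slopes(1) slopes(2)[OF js(1,2) \<sigma>s js(3)]
    by (intro sum_pos2[OF J js(1)]) (auto simp: le_minus_iff)
  finally show "0 < wdot \<iota> (sign_cells \<iota> P J) V (\<lambda>x. crease_fun J (\<iota> x)) (k + 1) c \<tau>" .
qed

end

section \<open>The regular subdivision\<close>

lemma finite_forms_representing:
  assumes EC: "euclidean_complex X \<iota> P" and fin: "finite (restr P U)"
  obtains J where "finite J" "\<forall>\<sigma>\<in>restr P U. \<exists>C\<subseteq>J. \<iota> ` \<sigma> = affine hull (\<iota> ` \<sigma>) \<inter> hpoly C"
proof -
  have "\<forall>\<sigma>\<in>restr P U. \<exists>C. finite C \<and> \<iota> ` \<sigma> = affine hull (\<iota> ` \<sigma>) \<inter> hpoly C"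
    using polyhedron_hpoly_representation euclidean_complexD(4)[OF EC]
    unfolding restr_def by (metis (no_types, lifting) mem_Collect_eq)
  then obtain C where C: "\<forall>\<sigma>\<in>restr P U. finite (C \<sigma>) \<and> \<iota> ` \<sigma> = affine hull (\<iota> ` \<sigma>) \<inter> hpoly (C \<sigma>)"
    by (rule bchoice[elim_format]) blast
  show thesis
  proof
    show "finite (\<Union>(C ` restr P U))"
      using fin C by blast
    show "\<forall>\<sigma>\<in>restr P U. \<exists>C'\<subseteq>\<Union>(C ` restr P U). \<iota> ` \<sigma> = affine hull (\<iota> ` \<sigma>) \<inter> hpoly C'"
      using C by blast
  qed
qed

lemma subdivides_sign_cells: "subdivides (sign_cells \<iota> P J) P"
  unfolding subdivides_def sign_cells_def by blast

lemma pw_affine_on_space_if_subdivision: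
  assumes "euclidean_complex X \<iota> P'" "subdivides P' P" "pw_affine_on \<iota> P' (topspace X) f"
  shows "pw_affine_on_space X \<iota> P f"
proof -
  have "subdivides P' P'"
    unfolding subdivides_def by blast
  then show ?thesis
    unfolding pw_affine_on_space_def equivalent_complexes_def using assms by blast
qed

lemma strongly_concave_crease_fun:
  assumes "convex H"
  shows "strongly_concave X \<iota> H (\<lambda>x. crease_fun J (\<iota> x))"
proof -
  have "{(y, t). y \<in> H \<and> ereal t \<le> ereal (crease_fun J y)} = {(y, t). y \<in> H \<and> t \<le> crease_fun J y}"
    by simp
  moreover have "convex {(y, t). y \<in> H \<and> t \<le> crease_fun J y}"
    using assms by (intro convex_hypograph) (simp add: concave_on_crease_fun)
  ultimately show ?thesis
    unfolding strongly_concave_def by (intro exI[of _ "\<lambda>y. ereal (crease_fun J y)"]) simp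
qed

theorem theorem4p22:
  fixes X :: "'a topology" and \<iota> :: "'a \<Rightarrow> 'v::euclidean_space"
    and H :: "'v set" and \<P> :: "'a set set" and U :: "'a set"
  assumes "euclidean_polyhedral_space X \<iota> H \<P>"
    and "openin X U"
    and "finite (restr \<P> U)"
  shows "\<exists>f. pw_affine_on_space X \<iota> \<P> f \<and> strongly_concave X \<iota> H f \<and>
             finite (restr (S_complex \<iota> \<P> f) U) \<and>
             strictly_concave_on_complex X \<iota> (S_complex \<iota> \<P> f) U f \<and>
             euclidean_complex X \<iota> (S_complex \<iota> \<P> f) \<and>
             subdivides (S_complex \<iota> \<P> f) \<P> \<and>
             regular_on X \<iota> (S_complex \<iota> \<P> f) U"
proof -
  have EC: "euclidean_complex X \<iota> \<P>" and in_H: "\<iota> ` topspace X \<subseteq> H"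
    and "hyperplane_off_origin H"
    using assms(1) unfolding euclidean_polyhedral_space_def by blast+
  then obtain \<alpha> \<beta> where \<beta>: "\<beta> \<noteq> 0" and H: "H = {y. \<alpha> \<bullet> y = \<beta>}"
    unfolding hyperplane_off_origin_def by blast
  have hyperplane: "\<forall>x\<in>topspace X. \<alpha> \<bullet> \<iota> x = \<beta>"
    using in_H H by blast
  obtain J where J: "finite J" and hrep: "\<forall>\<sigma>\<in>restr \<P> U. \<exists>C\<subseteq>J. \<iota> ` \<sigma> = affine hull (\<iota> ` \<sigma>) \<inter> hpoly C"
    using finite_forms_representing[OF EC assms(3)] .
  have fin: "finite (restr (sign_cells \<iota> \<P> J) U)"
    using finite_restr_sign_cells[OF J assms(3)] .
  have strict: "strictly_concave_on_complex X \<iota> (sign_cells \<iota> \<P> J) U (\<lambda>x. crease_fun J (\<iota> x))"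
    using strictly_concave_crease_fun[OF EC J hyperplane \<beta> hrep fin] .
  have "pw_affine_on_space X \<iota> \<P> (\<lambda>x. crease_fun J (\<iota> x))"
    using euclidean_complex_sign_cells[OF EC J] subdivides_sign_cells
      pw_affine_on_crease_fun[OF EC J hyperplane \<beta>] by (rule pw_affine_on_space_if_subdivision)
  moreover have "strongly_concave X \<iota> H (\<lambda>x. crease_fun J (\<iota> x))"
    unfolding H by (intro strongly_concave_crease_fun convex_hyperplane)
  ultimately show ?thesis
    using fin strict euclidean_complex_sign_cells[OF EC J] subdivides_sign_cells
    unfolding regular_on_def
    by (intro exI[of _ "\<lambda>x. crease_fun J (\<iota> x)"]) (simp add: S_complex_crease_fun[OF EC J]; blast)
qed

end
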